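(* In the setting of the reconstructed field $Y_D$ (described below), for all $a,b\in V$, $\alpha=1,\dots,D$ and all $n,m,\sigma$, $$T_\alpha\,\mu^D_{n;m,\sigma}(a\otimes b)=\mu^D_{n;m,\sigma}(T_\alpha a\otimes b)+\mu^D_{n;m,\sigma}(a\otimes T_\alpha b);$$ equivalently, $[T_\alpha,Y_D(a,\mathrm z)]=Y_D(T_\alpha a,\mathrm z)$.
   Context: Setting. $D$ even. $(V,Y_1,\mathbf 1,T_1)$ is a vertex algebra in dimension 1 with an action by even operators of $\mathfrak c_D$ (generators $T_\alpha,H,\Omega_{\alpha\beta}=-\Omega_{\beta\alpha},C_\alpha$ with $[H,\Omega_{\alpha\beta}]=[T_\alpha,T_\beta]=[C_\alpha,C_\beta]=0$, $[\Omega_{\alpha\beta},T_\gamma]=\delta_{\alpha\gamma}T_\beta-\delta_{\beta\gamma}T_\alpha$, $[\Omega_{\alpha\beta},C_\gamma]=\delta_{\alpha\gamma}C_\beta-\delta_{\beta\gamma}C_\alpha$, $[H,T_\alpha]=T_\alpha$, $[H,C_\alpha]=-C_\alpha$, $[T_\alpha,C_\beta]=2\delta_{\alpha\beta}H-2\Omega_{\alpha\beta}$, $\mathfrak{so}(D,\mathbb C)$ relations among $\Omega$'s) which is local (each element $X$ satisfies $(x-y)^N[[X,Y_1(a,x)],Y_1(b,y)]=0$ for some $N$), annihilates $\mathbf 1$, has $T_1$ acting as translation operator, $H$ diagonalizable with eigenvalues in $\frac12\mathbb Z_{\ge0}$, is unitary (positive-definite Hermitian product, adjoints $H^*=H$,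 $\Omega^*=-\Omega$, $T_\alpha^*=C_\alpha$), every vector lies in a finite-dimensional $\mathfrak{so}(D,\mathbb C)$-invariant subspace, $H+\mathrm i(\Omega_{12}+\cdots+\Omega_{D-1,D})$ has even integer eigenvalues, and the $\mathfrak{so}(D,\mathbb C)$-action integrates to a representation $U$ of $\mathrm{SO}(D,\mathbb C)$ with $U(\exp X)=\exp(X|_V)$, where $\Omega_{\alpha\beta}$ acts on $\mathbb C^D$ as $E_{\beta\alpha}-E_{\alpha\beta}$. $\mu^1_n$ is defined by $Y_1(a,x)b=\sum_n\mu^1_n(a\otimes b)x^n$; for $\mathrm u^2=1$, $g_{\mathrm u}=\exp(\vartheta\sum_{\alpha\ge2}u'^\alpha_\perp\Omega_{1\alpha})$ where $\mathrm u=(\cos\vartheta,\sin\vartheta\,\mathrm u'_\perp)$, $\mathrm u'^2_\perp=1$; $\{h_{m,\sigma}\}$ bases of homogeneous harmonic polynomials of degree $m$; $\mu^D_{n;m,\sigma}(a\otimes b)$ defined by $\sum_{m,\sigma}\mu^D_{n;m,\sigma}(a\otimes b)h_{m,\sigma}(\mathrm u)=U(g_{\mathrm u})\mu^1_n(U(g_{\mathrm u})^{-1}a\otimes U(g_{\mathrm u})^{-1}b)$; and $Y_D(a,\mathrm z)b:=\sum_{n,m,\sigma}\mu^D_{n;m,\sigma}(a\otimes b)(\mathrm z^2)^{(n-m)/2}h_{m,\sigma}(\mathrm z)\in V[\![\mathrm z]\!]_{\mathrm z^2}$. *)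

theory Defs
  imports "HOL-Analysis.Analysis"
begin

text \<open>V is modelled as a type 'v with an additive group structure and a complex
scalar multiplication sc (a vector_space in the sense of HOL's Vector_Spaces locale).\<close>

definition lin :: "(complex \<Rightarrow> 'v::ab_group_add \<Rightarrow> 'v) \<Rightarrow> ('v \<Rightarrow> 'v) \<Rightarrow> bool" where
  "lin sc f \<longleftrightarrow> Vector_Spaces.linear sc sc f"

definition bilin :: "(complex \<Rightarrow> 'v::ab_group_add \<Rightarrow> 'v) \<Rightarrow> ('v \<Rightarrow> 'v \<Rightarrow> 'v) \<Rightarrow> bool" where
  "bilin sc g \<longleftrightarrow> (\<forall>a. lin sc (g a)) \<and> (\<forall>b. lin sc (\<lambda>a. g a b))"

definition comm :: "('v::ab_group_add \<Rightarrow> 'v) \<Rightarrow> ('v \<Rightarrow> 'v) \<Rightarrow> 'v \<Rightarrow> 'v" where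
  "comm f g = (\<lambda>v. f (g v) - g (f v))"

definition super_grading :: "(complex \<Rightarrow> 'v::ab_group_add \<Rightarrow> 'v) \<Rightarrow> 'v set \<Rightarrow> 'v set \<Rightarrow> bool" where
  "super_grading sc V0 V1 \<longleftrightarrow> module.subspace sc V0 \<and> module.subspace sc V1 \<and>
     V0 \<inter> V1 = {0} \<and> (\<forall>v. \<exists>v0\<in>V0. \<exists>v1\<in>V1. v = v0 + v1)"

definition homog :: "'v set \<Rightarrow> 'v set \<Rightarrow> 'v \<Rightarrow> bool" where
  "homog V0 V1 a \<longleftrightarrow> a \<in> V0 \<or> a \<in> V1"

definition psign :: "'v set \<Rightarrow> 'v \<Rightarrow> 'v \<Rightarrow> complex" where
  "psign V1 a b = (if a \<in> V1 \<and> b \<in> V1 then -1 else 1)"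

definition even_op :: "'v set \<Rightarrow> 'v set \<Rightarrow> ('v \<Rightarrow> 'v) \<Rightarrow> bool" where
  "even_op V0 V1 f \<longleftrightarrow> f ` V0 \<subseteq> V0 \<and> f ` V1 \<subseteq> V1"

definition parity_compat :: "'v set \<Rightarrow> 'v set \<Rightarrow> (int \<Rightarrow> 'v \<Rightarrow> 'v \<Rightarrow> 'v) \<Rightarrow> bool" where
  "parity_compat V0 V1 Y \<longleftrightarrow> (\<forall>n a b.
     (a \<in> V0 \<and> b \<in> V0 \<longrightarrow> Y n a b \<in> V0) \<and> (a \<in> V0 \<and> b \<in> V1 \<longrightarrow> Y n a b \<in> V1) \<and>
     (a \<in> V1 \<and> b \<in> V0 \<longrightarrow> Y n a b \<in> V1) \<and> (a \<in> V1 \<and> b \<in> V1 \<longrightarrow> Y n a b \<in> V0))"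

text \<open>A formal series F(x,y) = sum F p q x^p y^q of operators (p,q integers) satisfies
(x-y)^N F(x,y) = 0 (applied to every vector c) iff every coefficient of the product vanishes:
the coefficient of x^p y^q in (x-y)^N F is sum_k (-1)^k (N choose k) F (p-N+k) (q-k).\<close>
definition loc_series :: "(complex \<Rightarrow> 'v::ab_group_add \<Rightarrow> 'v) \<Rightarrow> nat \<Rightarrow> (int \<Rightarrow> int \<Rightarrow> 'v \<Rightarrow> 'v) \<Rightarrow> bool" where
  "loc_series sc N F \<longleftrightarrow> (\<forall>c p q.
     (\<Sum>k\<le>N. sc ((-1) ^ k * of_nat (N choose k)) (F (p - int N + int k) (q - int k) c)) = 0)"

text \<open>Y_1(a,x)b = sum_n Y n a b x^n (n :: int). Axioms (Kac): fields, vacuum, creation,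
translation covariance, locality (with Koszul signs).\<close>
definition vertex_algebra_1 ::
  "(complex \<Rightarrow> 'v::ab_group_add \<Rightarrow> 'v) \<Rightarrow> 'v set \<Rightarrow> 'v set \<Rightarrow> (int \<Rightarrow> 'v \<Rightarrow> 'v \<Rightarrow> 'v) \<Rightarrow> 'v \<Rightarrow> ('v \<Rightarrow> 'v) \<Rightarrow> bool" where
  "vertex_algebra_1 sc V0 V1 Y vac T1 \<longleftrightarrow>
     vector_space sc \<and> super_grading sc V0 V1 \<and>
     (\<forall>n. bilin sc (Y n)) \<and> lin sc T1 \<and> parity_compat V0 V1 Y \<and> vac \<in> V0 \<and> even_op V0 V1 T1 \<and>
     (\<forall>a b. \<exists>N. \<forall>n<N. Y n a b = 0) \<and>
     (\<forall>n b. Y n vac b = (if n = 0 then b else 0)) \<and>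
     (\<forall>a n. n < 0 \<longrightarrow> Y n a vac = 0) \<and> (\<forall>a. Y 0 a vac = a) \<and>
     T1 vac = 0 \<and>
     (\<forall>n a c. T1 (Y n a c) - Y n a (T1 c) = sc (of_int (n + 1)) (Y (n + 1) a c)) \<and>
     (\<forall>a b. homog V0 V1 a \<and> homog V0 V1 b \<longrightarrow>
        (\<exists>N. loc_series sc N (\<lambda>p q c. Y p a (Y q b c) - sc (psign V1 a b) (Y q b (Y p a c)))))"

definition cD_relations ::
  "(complex \<Rightarrow> 'v::ab_group_add \<Rightarrow> 'v) \<Rightarrow> nat \<Rightarrow> (nat \<Rightarrow> 'v \<Rightarrow> 'v) \<Rightarrow> ('v \<Rightarrow> 'v) \<Rightarrow>
    (nat \<Rightarrow> nat \<Rightarrow> 'v \<Rightarrow> 'v) \<Rightarrow> (nat \<Rightarrow> 'v \<Rightarrow> 'v) \<Rightarrow> bool" where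
  "cD_relations sc D T H Om C \<longleftrightarrow>
    (\<forall>\<alpha>\<in>{1..D}. \<forall>\<beta>\<in>{1..D}.
       Om \<alpha> \<beta> = (\<lambda>v. - Om \<beta> \<alpha> v) \<and>
       comm H (Om \<alpha> \<beta>) = (\<lambda>v. 0) \<and>
       comm (T \<alpha>) (T \<beta>) = (\<lambda>v. 0) \<and>
       comm (C \<alpha>) (C \<beta>) = (\<lambda>v. 0) \<and>
       comm (T \<alpha>) (C \<beta>) = (\<lambda>v. (if \<alpha> = \<beta> then sc 2 (H v) else 0) - sc 2 (Om \<alpha> \<beta> v)) \<and>
       (\<forall>\<gamma>\<in>{1..D}.
          comm (Om \<alpha> \<beta>) (T \<gamma>) = (\<lambda>v. (if \<alpha> = \<gamma> then T \<beta> v else 0) - (if \<beta> = \<gamma> then T \<alpha> v else 0)) \<and>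
          comm (Om \<alpha> \<beta>) (C \<gamma>) = (\<lambda>v. (if \<alpha> = \<gamma> then C \<beta> v else 0) - (if \<beta> = \<gamma> then C \<alpha> v else 0))) \<and>
       (\<forall>\<gamma>\<in>{1..D}. \<forall>\<delta>\<in>{1..D}.
          comm (Om \<alpha> \<beta>) (Om \<gamma> \<delta>) = (\<lambda>v.
             (if \<alpha> = \<delta> then Om \<gamma> \<beta> v else 0) - (if \<alpha> = \<gamma> then Om \<delta> \<beta> v else 0)
           - (if \<beta> = \<delta> then Om \<gamma> \<alpha> v else 0) + (if \<beta> = \<gamma> then Om \<delta> \<alpha> v else 0)))) \<and>
    (\<forall>\<alpha>\<in>{1..D}. comm H (T \<alpha>) = T \<alpha> \<and> comm H (C \<alpha>) = (\<lambda>v. - C \<alpha> v))"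

definition cD_gens :: "nat \<Rightarrow> (nat \<Rightarrow> 'v \<Rightarrow> 'v) \<Rightarrow> ('v \<Rightarrow> 'v) \<Rightarrow>
    (nat \<Rightarrow> nat \<Rightarrow> 'v \<Rightarrow> 'v) \<Rightarrow> (nat \<Rightarrow> 'v \<Rightarrow> 'v) \<Rightarrow> ('v \<Rightarrow> 'v) set" where
  "cD_gens D T H Om C = T ` {1..D} \<union> {H} \<union> (\<lambda>(\<alpha>,\<beta>). Om \<alpha> \<beta>) ` ({1..D} \<times> {1..D}) \<union> C ` {1..D}"

text \<open>Locality of an operator X with respect to Y: (x-y)^N [[X,Y(a,x)],Y(b,y)] = 0.\<close>
definition op_local ::
  "(complex \<Rightarrow> 'v::ab_group_add \<Rightarrow> 'v) \<Rightarrow> 'v set \<Rightarrow> 'v set \<Rightarrow> (int \<Rightarrow> 'v \<Rightarrow> 'v \<Rightarrow> 'v) \<Rightarrow> ('v \<Rightarrow> 'v) \<Rightarrow> bool" where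
  "op_local sc V0 V1 Y X \<longleftrightarrow> (\<forall>a b. homog V0 V1 a \<and> homog V0 V1 b \<longrightarrow>
     (\<exists>N. loc_series sc N (\<lambda>p q c.
        let Z = (\<lambda>w. X (Y p a w) - Y p a (X w)) in
        Z (Y q b c) - sc (psign V1 a b) (Y q b (Z c)))))"

definition dmat :: "nat \<Rightarrow> (nat \<Rightarrow> nat \<Rightarrow> complex) \<Rightarrow> bool" where
  "dmat D A \<longleftrightarrow> (\<forall>i j. i \<notin> {1..D} \<or> j \<notin> {1..D} \<longrightarrow> A i j = 0)"

definition mid :: "nat \<Rightarrow> nat \<Rightarrow> nat \<Rightarrow> complex" where
  "mid D i j = (if i = j \<and> i \<in> {1..D} then 1 else 0)"

definition mmul :: "nat \<Rightarrow> (nat \<Rightarrow> nat \<Rightarrow> complex) \<Rightarrow> (nat \<Rightarrow> nat \<Rightarrow> complex) \<Rightarrow> nat \<Rightarrow> nat \<Rightarrow> complex" where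
  "mmul D A B i j = (\<Sum>k=1..D. A i k * B k j)"

definition mpow :: "nat \<Rightarrow> (nat \<Rightarrow> nat \<Rightarrow> complex) \<Rightarrow> nat \<Rightarrow> nat \<Rightarrow> nat \<Rightarrow> complex" where
  "mpow D A k = (mmul D A ^^ k) (mid D)"

definition mexp :: "nat \<Rightarrow> (nat \<Rightarrow> nat \<Rightarrow> complex) \<Rightarrow> nat \<Rightarrow> nat \<Rightarrow> complex" where
  "mexp D A i j = (\<Sum>k. mpow D A k i j / of_nat (fact k))"

definition mtr :: "(nat \<Rightarrow> nat \<Rightarrow> complex) \<Rightarrow> nat \<Rightarrow> nat \<Rightarrow> complex" where
  "mtr A i j = A j i"

definition mdet :: "nat \<Rightarrow> (nat \<Rightarrow> nat \<Rightarrow> complex) \<Rightarrow> complex" where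
  "mdet D A = (\<Sum>p | p permutes {1..D}. of_int (sign p) * (\<Prod>i=1..D. A i (p i)))"

definition SOc :: "nat \<Rightarrow> (nat \<Rightarrow> nat \<Rightarrow> complex) set" where
  "SOc D = {A. dmat D A \<and> mmul D (mtr A) A = mid D \<and> mdet D A = 1}"

definition soc :: "nat \<Rightarrow> (nat \<Rightarrow> nat \<Rightarrow> complex) set" where
  "soc D = {X. dmat D X \<and> mtr X = (\<lambda>i j. - X i j)}"

text \<open>The matrix by which Omega_{alpha beta} acts on C^D: E_{beta alpha} - E_{alpha beta}.\<close>
definition Mgen :: "nat \<Rightarrow> nat \<Rightarrow> nat \<Rightarrow> nat \<Rightarrow> complex" where
  "Mgen \<alpha> \<beta> i j = (if i = \<beta> \<and> j = \<alpha> then 1 else 0) - (if i = \<alpha> \<and> j = \<beta> then 1 else 0)"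

text \<open>Action on V of X = sum_{alpha<beta} X_{beta alpha} Mgen alpha beta in so(D,C).\<close>
definition rho :: "(complex \<Rightarrow> 'v::ab_group_add \<Rightarrow> 'v) \<Rightarrow> nat \<Rightarrow> (nat \<Rightarrow> nat \<Rightarrow> 'v \<Rightarrow> 'v) \<Rightarrow>
    (nat \<Rightarrow> nat \<Rightarrow> complex) \<Rightarrow> 'v \<Rightarrow> 'v" where
  "rho sc D Om X v = (\<Sum>\<alpha>=1..D. \<Sum>\<beta>\<in>{\<alpha><..D}. sc (X \<beta> \<alpha>) (Om \<alpha> \<beta> v))"

text \<open>Exponential of a locally finite operator: computed inside a finite-dimensional
X-invariant subspace span B containing v, where the partial sums converge coordinatewise.\<close>
definition expop :: "(complex \<Rightarrow> 'v::ab_group_add \<Rightarrow> 'v) \<Rightarrow> ('v \<Rightarrow> 'v) \<Rightarrow> 'v \<Rightarrow> 'v" where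
  "expop sc X v = (THE w. \<exists>B. finite B \<and> \<not> module.dependent sc B \<and> v \<in> module.span sc B \<and>
      X ` module.span sc B \<subseteq> module.span sc B \<and> w \<in> module.span sc B \<and>
      (\<forall>b\<in>B. (\<lambda>N. module.representation sc B (\<Sum>k<N. sc (1 / of_nat (fact k)) ((X ^^ k) v)) b)
               \<longlonglongrightarrow> module.representation sc B w b))"

definition integrates ::
  "(complex \<Rightarrow> 'v::ab_group_add \<Rightarrow> 'v) \<Rightarrow> nat \<Rightarrow> (nat \<Rightarrow> nat \<Rightarrow> 'v \<Rightarrow> 'v) \<Rightarrow>
   ((nat \<Rightarrow> nat \<Rightarrow> complex) \<Rightarrow> 'v \<Rightarrow> 'v) \<Rightarrow> bool" where
  "integrates sc D Om U \<longleftrightarrow>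
     (\<forall>A\<in>SOc D. lin sc (U A)) \<and> U (mid D) = id \<and>
     (\<forall>A\<in>SOc D. \<forall>B\<in>SOc D. U (mmul D A B) = U A \<circ> U B) \<and>
     (\<forall>X\<in>soc D. U (mexp D X) = expop sc (rho sc D Om X))"

section \<open>Homogeneous harmonic polynomials in D variables (coefficient representation)\<close>

definition MI :: "nat \<Rightarrow> nat \<Rightarrow> (nat \<Rightarrow> nat) set" where
  "MI D m = {k. (\<forall>i. i \<notin> {1..D} \<longrightarrow> k i = 0) \<and> (\<Sum>i=1..D. k i) = m}"

definition hom_poly :: "nat \<Rightarrow> nat \<Rightarrow> ((nat \<Rightarrow> nat) \<Rightarrow> complex) \<Rightarrow> bool" where
  "hom_poly D m c \<longleftrightarrow> (\<forall>k. k \<notin> MI D m \<longrightarrow> c k = 0)"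

text \<open>Coefficient of x^k in the Laplacian of sum_k c_k x^k.\<close>
definition harmonic :: "nat \<Rightarrow> ((nat \<Rightarrow> nat) \<Rightarrow> complex) \<Rightarrow> bool" where
  "harmonic D c \<longleftrightarrow> (\<forall>k. (\<Sum>i=1..D. of_nat ((k i + 2) * (k i + 1)) * c (k(i := k i + 2))) = 0)"

definition peval :: "nat \<Rightarrow> nat \<Rightarrow> ((nat \<Rightarrow> nat) \<Rightarrow> complex) \<Rightarrow> (nat \<Rightarrow> real) \<Rightarrow> complex" where
  "peval D m c u = (\<Sum>k\<in>MI D m. c k * (\<Prod>i=1..D. complex_of_real (u i) ^ k i))"

definition harm_basis :: "nat \<Rightarrow> nat \<Rightarrow> 's set \<Rightarrow> ('s \<Rightarrow> (nat \<Rightarrow> nat) \<Rightarrow> complex) \<Rightarrow> bool" where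
  "harm_basis D m S h \<longleftrightarrow> finite S \<and> (\<forall>\<sigma>\<in>S. hom_poly D m (h \<sigma>) \<and> harmonic D (h \<sigma>)) \<and>
     (\<forall>\<beta>. (\<forall>k. (\<Sum>\<sigma>\<in>S. \<beta> \<sigma> * h \<sigma> k) = 0) \<longrightarrow> (\<forall>\<sigma>\<in>S. \<beta> \<sigma> = 0)) \<and>
     (\<forall>c. hom_poly D m c \<and> harmonic D c \<longrightarrow> (\<exists>\<beta>. \<forall>k. c k = (\<Sum>\<sigma>\<in>S. \<beta> \<sigma> * h \<sigma> k)))"

text \<open>The generator theta * sum_{alpha>=2} u'_alpha Omega_{1 alpha} of g_u, as a matrix.\<close>
definition Xu :: "nat \<Rightarrow> real \<Rightarrow> (nat \<Rightarrow> real) \<Rightarrow> nat \<Rightarrow> nat \<Rightarrow> complex" where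
  "Xu D \<theta> u' i j = complex_of_real \<theta> * (\<Sum>\<alpha>=2..D. complex_of_real (u' \<alpha>) * Mgen 1 \<alpha> i j)"

definition setting ::
  "(complex \<Rightarrow> 'v::ab_group_add \<Rightarrow> 'v) \<Rightarrow> nat \<Rightarrow> 'v set \<Rightarrow> 'v set \<Rightarrow> (int \<Rightarrow> 'v \<Rightarrow> 'v \<Rightarrow> 'v) \<Rightarrow> 'v \<Rightarrow> ('v \<Rightarrow> 'v) \<Rightarrow>
   (nat \<Rightarrow> 'v \<Rightarrow> 'v) \<Rightarrow> ('v \<Rightarrow> 'v) \<Rightarrow> (nat \<Rightarrow> nat \<Rightarrow> 'v \<Rightarrow> 'v) \<Rightarrow> (nat \<Rightarrow> 'v \<Rightarrow> 'v) \<Rightarrow>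
   ('v \<Rightarrow> 'v \<Rightarrow> complex) \<Rightarrow> ((nat \<Rightarrow> nat \<Rightarrow> complex) \<Rightarrow> 'v \<Rightarrow> 'v) \<Rightarrow> bool" where
  "setting sc D V0 V1 Y vac T1 T H Om C ip U \<longleftrightarrow>
     even D \<and>
     vertex_algebra_1 sc V0 V1 Y vac T1 \<and>
     cD_relations sc D T H Om C \<and>
     (\<forall>X\<in>cD_gens D T H Om C. lin sc X \<and> even_op V0 V1 X \<and> op_local sc V0 V1 Y X \<and> X vac = 0) \<and>
     T 1 = T1 \<and>
     (\<forall>v. v \<in> module.span sc {w. \<exists>k::nat. H w = sc (of_nat k / 2) w}) \<and>
     (\<forall>a b. ip a b = cnj (ip b a)) \<and>
     (\<forall>a b b'. ip a (b + b') = ip a b + ip a b') \<and> (\<forall>a b z. ip a (sc z b) = z * ip a b) \<and>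
     (\<forall>a. a \<noteq> 0 \<longrightarrow> ip a a \<in> \<real> \<and> Re (ip a a) > 0) \<and>
     (\<forall>a b. ip (H a) b = ip a (H b)) \<and>
     (\<forall>\<alpha>\<in>{1..D}. \<forall>\<beta>\<in>{1..D}. \<forall>a b. ip (Om \<alpha> \<beta> a) b = - ip a (Om \<alpha> \<beta> b)) \<and>
     (\<forall>\<alpha>\<in>{1..D}. \<forall>a b. ip (T \<alpha> a) b = ip a (C \<alpha> b)) \<and>
     (\<forall>v. \<exists>B. finite B \<and> v \<in> module.span sc B \<and>
        (\<forall>\<alpha>\<in>{1..D}. \<forall>\<beta>\<in>{1..D}. Om \<alpha> \<beta> ` module.span sc B \<subseteq> module.span sc B)) \<and>
     (\<forall>lam v. v \<noteq> 0 \<and> H v + sc \<i> (\<Sum>j=1..D div 2. Om (2 * j - 1) (2 * j) v) = sc lam v \<longrightarrow>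
        (\<exists>k::int. lam = of_int (2 * k))) \<and>
     integrates sc D Om U"

text \<open>mu^D_{n;m,sigma}(a (x) b) = muD n m sigma a b, characterised by its defining expansion.\<close>
definition muD_expansion ::
  "(complex \<Rightarrow> 'v::ab_group_add \<Rightarrow> 'v) \<Rightarrow> nat \<Rightarrow> (int \<Rightarrow> 'v \<Rightarrow> 'v \<Rightarrow> 'v) \<Rightarrow>
   ((nat \<Rightarrow> nat \<Rightarrow> complex) \<Rightarrow> 'v \<Rightarrow> 'v) \<Rightarrow> (nat \<Rightarrow> 's set) \<Rightarrow> (nat \<Rightarrow> 's \<Rightarrow> (nat \<Rightarrow> nat) \<Rightarrow> complex) \<Rightarrow>
   (int \<Rightarrow> nat \<Rightarrow> 's \<Rightarrow> 'v \<Rightarrow> 'v \<Rightarrow> 'v) \<Rightarrow> bool" where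
  "muD_expansion sc D Y U Sig h muD \<longleftrightarrow>
     (\<forall>n a b. \<exists>M. (\<forall>m \<sigma>. M < m \<longrightarrow> \<sigma> \<in> Sig m \<longrightarrow> muD n m \<sigma> a b = 0) \<and>
        (\<forall>(\<theta>::real) (u'::nat \<Rightarrow> real). (\<Sum>\<alpha>=2..D. (u' \<alpha>)\<^sup>2) = 1 \<longrightarrow>
           (let u = (\<lambda>i. if i = 1 then cos \<theta> else sin \<theta> * u' i);
                g = mexp D (Xu D \<theta> u')
            in (\<Sum>m\<le>M. \<Sum>\<sigma>\<in>Sig m. sc (peval D m (h m \<sigma>) u) (muD n m \<sigma> a b))
               = U g (Y n (inv (U g) a) (inv (U g) b)))))"

end

theory Submission
  imports Defs "HOL-Computational_Algebra.Polynomial"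
begin

text \<open>Write F_g(a, b) = U(g) mu^1_n(U(g)^-1 a, U(g)^-1 b); the mu^D_{n;m,sigma}(a, b) are the
coefficients of F_{g_u}(a, b) in the harmonic polynomials h_{m,sigma}(u).

First, T_alpha is a derivation of every mu^1_n. Its defect X(Y_p a c) - Y_p a (X c) - Y_p (X a) c
vanishes at c = 1, because T_alpha commutes with T_1 and kills the vacuum. For c = Y_q b 1 the
locality of T_alpha and of Y gives a relation (x - y)^N = 0 between these defects; as they vanish
for q < 0, induction on q shows that they vanish identically.

Second, U(g) = exp(rho X) with X in so(D), and [rho X, T_beta] is a linear combination of the
T_gamma. Hence U(g)^-1 T_alpha U(g) is again such a combination, so T_alpha is also a derivation of
every F_g. The exponentials are handled coordinatewise in finite-dimensional invariant subspaces.

Finally, the restrictions to the unit sphere of homogeneous harmonic polynomials are linearly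
independent: after homogenisation with powers of |x|^2, the top-degree component is
Fischer-orthogonal to all multiples of |x|^2. So the identity for F_g transfers to its
coefficients.\<close>

section \<open>Linear maps and locality series\<close>

lemma lin_iff_module_hom: "lin sc f \<longleftrightarrow> module_hom sc sc f"
  unfolding lin_def by (simp add: module_hom_iff_linear)

lemma lin_add: "lin sc f \<Longrightarrow> f (x + y) = f x + f y"
  using lin_iff_module_hom module_hom.add by blast
lemma lin_scale: "lin sc f \<Longrightarrow> f (sc c x) = sc c (f x)"
  using lin_iff_module_hom module_hom.scale by blast
lemma lin_zero: "lin sc f \<Longrightarrow> f 0 = 0"
  using lin_iff_module_hom module_hom.zero by blast
lemma lin_diff: "lin sc f \<Longrightarrow> f (x - y) = f x - f y"
  using lin_iff_module_hom module_hom.diff by blast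
lemma lin_neg: "lin sc f \<Longrightarrow> f (- x) = - f x"
  using lin_iff_module_hom module_hom.neg by blast
lemma lin_sum: "lin sc f \<Longrightarrow> f (sum g S) = (\<Sum>a\<in>S. f (g a))"
  using lin_iff_module_hom module_hom.sum by blast

locale complex_vs = vector_space sc for sc :: "complex \<Rightarrow> 'v::ab_group_add \<Rightarrow> 'v"
begin

sublocale hom: module_pair sc sc by unfold_locales

lemma lin_id: "lin sc id"
  unfolding lin_def by (rule linear_id)

lemma lin_comp: "lin sc f \<Longrightarrow> lin sc g \<Longrightarrow> lin sc (f \<circ> g)"
  unfolding lin_iff_module_hom by (rule module_hom_compose)

lemma lin_funpow: "lin sc f \<Longrightarrow> lin sc (f ^^ k)"
  by (induction k) (simp_all add: lin_id lin_comp)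

lemma lin_uminus: "lin sc f \<Longrightarrow> lin sc (\<lambda>x. - f x)"
  unfolding lin_iff_module_hom by (rule hom.module_hom_neg)

lemma lin_scale_fun: "lin sc f \<Longrightarrow> lin sc (\<lambda>x. sc c (f x))"
  unfolding lin_iff_module_hom by (rule hom.module_hom_scale)

lemma lin_sum_fun: "(\<And>i. i \<in> I \<Longrightarrow> lin sc (f i)) \<Longrightarrow> lin sc (\<lambda>x. \<Sum>i\<in>I. f i x)"
  unfolding lin_iff_module_hom by (rule hom.module_hom_sum) (auto intro: module_axioms)

lemma sum_choose_Suc_scale:
  "(\<Sum>k\<le>Suc N. sc (of_nat (Suc N choose k)) (g k)) =
   (\<Sum>k\<le>N. sc (of_nat (N choose k)) (g k)) + (\<Sum>k\<le>N. sc (of_nat (N choose k)) (g (Suc k)))"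
proof -
  have A: "(\<Sum>k\<le>Suc N. sc (of_nat (Suc N choose k)) (g k)) = g 0 + (\<Sum>k\<le>N. sc (of_nat (Suc N choose Suc k)) (g (Suc k)))"
    by (subst sum.atMost_Suc_shift) simp
  have B: "(\<Sum>k\<le>N. sc (of_nat (Suc N choose Suc k)) (g (Suc k))) =
     (\<Sum>k\<le>N. sc (of_nat (N choose k)) (g (Suc k))) + (\<Sum>k\<le>N. sc (of_nat (N choose Suc k)) (g (Suc k)))"
    by (simp add: sum.distrib[symmetric] scale_left_distrib[symmetric])
  have "(\<Sum>k\<le>N. sc (of_nat (N choose k)) (g k)) = (\<Sum>k\<le>Suc N. sc (of_nat (N choose k)) (g k))"
    by simp
  also have "\<dots> = g 0 + (\<Sum>k\<le>N. sc (of_nat (N choose Suc k)) (g (Suc k)))"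
    by (subst sum.atMost_Suc_shift) simp
  finally show ?thesis using A B by (simp add: algebra_simps)
qed

lemma loc_series_Suc:
  assumes "loc_series sc N F"
  shows "loc_series sc (Suc N) F"
  unfolding loc_series_def
proof (intro allI)
  fix c p q
  let ?S = "\<lambda>p q. (\<Sum>k\<le>N. sc ((-1) ^ k * of_nat (N choose k)) (F (p - int N + int k) (q - int k) c))"
  have S0: "?S p q = 0" for p q using assms unfolding loc_series_def by blast
  define g where "g k = sc ((-1)^k) (F (p - int (Suc N) + int k) (q - int k) c)" for k
  have "(\<Sum>k\<le>Suc N. sc ((-1) ^ k * of_nat (Suc N choose k)) (F (p - int (Suc N) + int k) (q - int k) c))
      = (\<Sum>k\<le>Suc N. sc (of_nat (Suc N choose k)) (g k))"
    by (simp add: g_def mult.commute)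
  also have "\<dots> = (\<Sum>k\<le>N. sc (of_nat (N choose k)) (g k)) + (\<Sum>k\<le>N. sc (of_nat (N choose k)) (g (Suc k)))"
    by (rule sum_choose_Suc_scale)
  also have "(\<Sum>k\<le>N. sc (of_nat (N choose k)) (g k)) = ?S (p - 1) q"
    by (rule sum.cong) (simp_all add: g_def mult.commute algebra_simps)
  also have "(\<Sum>k\<le>N. sc (of_nat (N choose k)) (g (Suc k))) = - ?S p (q - 1)"
    unfolding sum_negf[symmetric]
    by (rule sum.cong) (simp_all add: g_def mult.commute algebra_simps)
  finally show "(\<Sum>k\<le>Suc N. sc ((-1) ^ k * of_nat (Suc N choose k)) (F (p - int (Suc N) + int k) (q - int k) c)) = 0"
    using S0 by simp
qed

lemma loc_series_mono:
  assumes "loc_series sc N F" "N \<le> M"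
  shows "loc_series sc M F"
proof -
  have "loc_series sc (N + k) F" for k
    by (induction k) (use assms loc_series_Suc in auto)
  from this[of "M - N"] assms(2) show ?thesis by simp
qed

lemma loc_series_diff:
  assumes "loc_series sc N F" "loc_series sc N G"
  shows "loc_series sc N (\<lambda>p q c. F p q c - G p q c)"
  using assms unfolding loc_series_def
  by (simp add: scale_right_diff_distrib sum_subtractf)

text \<open>Strong induction on q: the relation at (p + N, q) expresses H p q through terms with
smaller second index.\<close>
lemma loc_relation_vanishes:
  fixes H :: "int \<Rightarrow> int \<Rightarrow> 'v"
  assumes rel: "\<And>p q. (\<Sum>k\<le>N. sc ((-1) ^ k * of_nat (N choose k)) (H (p - int N + int k) (q - int k))) = 0"
    and neg: "\<And>p q. q < 0 \<Longrightarrow> H p q = 0"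
  shows "H p q = 0"
proof -
  have "\<forall>p. H p (int m) = 0" for m
  proof (induction m rule: less_induct)
    case (less m)
    show ?case
    proof
      fix p
      have z: "H (p + int k) (int m - int k) = 0" if "0 < k" for k
      proof (cases "int m - int k < 0")
        case True thus ?thesis using neg by blast
      next
        case False
        hence "int m - int k = int (m - k)" "m - k < m" using \<open>0 < k\<close> by auto
        thus ?thesis using less by metis
      qed
      have "0 = (\<Sum>k\<le>N. sc ((-1) ^ k * of_nat (N choose k)) (H (p + int N - int N + int k) (int m - int k)))"
        using rel by presburger
      also have "\<dots> = (\<Sum>k\<in>{0}. sc ((-1) ^ k * of_nat (N choose k)) (H (p + int k) (int m - int k)))"
        by (rule sum.mono_neutral_cong_right) (auto simp: z)
      finally show "H p (int m) = 0" by simp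
    qed
  qed
  thus ?thesis using neg by (cases "q < 0") (auto, metis nonneg_int_cases not_less)
qed

end

locale vertex_alg = complex_vs sc for sc :: "complex \<Rightarrow> 'v::ab_group_add \<Rightarrow> 'v" +
  fixes V0 V1 :: "'v set" and Y :: "int \<Rightarrow> 'v \<Rightarrow> 'v \<Rightarrow> 'v" and vac :: 'v and T1 :: "'v \<Rightarrow> 'v"
  assumes va: "vertex_algebra_1 sc V0 V1 Y vac T1"
begin

lemma Y_lin_right: "lin sc (Y n a)" using va unfolding vertex_algebra_1_def bilin_def by blast
lemma Y_lin_left: "lin sc (\<lambda>a. Y n a b)" using va unfolding vertex_algebra_1_def bilin_def by blast

lemma Y_right_zero[simp]: "Y n a 0 = 0" using lin_zero[OF Y_lin_right] .
lemma Y_left_zero[simp]: "Y n 0 b = 0" using lin_zero[OF Y_lin_left[of n b]] by simp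
lemma Y_add_right: "Y n a (x + y) = Y n a x + Y n a y" using lin_add[OF Y_lin_right] .
lemma Y_add_left: "Y n (x + y) b = Y n x b + Y n y b" using lin_add[OF Y_lin_left[of n b]] by simp
lemma Y_diff_right: "Y n a (x - y) = Y n a x - Y n a y" using lin_diff[OF Y_lin_right] .
lemma Y_scale_right: "Y n a (sc c x) = sc c (Y n a x)" using lin_scale[OF Y_lin_right] .
lemma Y_scale_left: "Y n (sc c x) b = sc c (Y n x b)" using lin_scale[OF Y_lin_left[of n b]] by simp

lemma Y_neg_vac: "n < 0 \<Longrightarrow> Y n a vac = 0" using va unfolding vertex_algebra_1_def by blast
lemma Y_zero_vac: "Y 0 a vac = a" using va unfolding vertex_algebra_1_def by blast
lemma T1_vac: "T1 vac = 0" using va unfolding vertex_algebra_1_def by blast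
lemma T1_covariance: "T1 (Y n a c) - Y n a (T1 c) = sc (of_int (n + 1)) (Y (n + 1) a c)"
  using va unfolding vertex_algebra_1_def by blast

lemma Y_vac_succ: "Y (int k + 1) a vac = sc (1 / of_nat (k + 1)) (T1 (Y (int k) a vac))"
proof -
  have "T1 (Y (int k) a vac) = sc (of_int (int k + 1)) (Y (int k + 1) a vac)"
    using T1_covariance[of "int k" a vac] by (simp add: T1_vac)
  hence "sc (1 / of_nat (k + 1)) (T1 (Y (int k) a vac)) = sc ((1 / of_nat (k + 1)) * of_int (int k + 1)) (Y (int k + 1) a vac)"
    by simp
  also have "(1 / of_nat (k + 1)) * of_int (int k + 1) = (1::complex)"
  proof -
    have "(of_nat (Suc k) :: complex) \<noteq> 0" by (rule of_nat_neq_0)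
    thus ?thesis by (simp add: field_simps)
  qed
  finally show ?thesis by simp
qed

lemma Y_vac_commute:
  assumes X: "lin sc X" and XT: "\<And>v. X (T1 v) = T1 (X v)"
  shows "X (Y n a vac) = Y n (X a) vac"
proof (cases "n < 0")
  case True thus ?thesis by (simp add: Y_neg_vac lin_zero[OF X])
next
  case False
  then obtain k where k: "n = int k" by (metis nat_0_le not_le)
  have "X (Y (int k) a vac) = Y (int k) (X a) vac"
  proof (induction k)
    case 0 thus ?case by (simp add: Y_zero_vac)
  next
    case (Suc k)
    have "X (Y (int (Suc k)) a vac) = X (Y (int k + 1) a vac)" by (simp add: add.commute)
    also have "\<dots> = sc (1 / of_nat (k + 1)) (T1 (X (Y (int k) a vac)))"
      by (simp only: Y_vac_succ lin_scale[OF X] XT)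
    also have "\<dots> = Y (int k + 1) (X a) vac" by (simp only: Suc Y_vac_succ)
    finally show ?case by (simp add: add.commute)
  qed
  thus ?thesis using k by simp
qed

definition der_defect :: "('v \<Rightarrow> 'v) \<Rightarrow> 'v \<Rightarrow> int \<Rightarrow> 'v \<Rightarrow> 'v" where
  "der_defect X a p c = X (Y p a c) - Y p a (X c) - Y p (X a) c"

lemma der_defect_vac:
  assumes X: "lin sc X" and XT: "\<And>v. X (T1 v) = T1 (X v)" and Xv: "X vac = 0"
  shows "der_defect X a p vac = 0"
  unfolding der_defect_def using Y_vac_commute[OF X XT] Xv by simp

lemma super_grading_V: "super_grading sc V0 V1" using va unfolding vertex_algebra_1_def by blast

lemma V0_Int_V1: "V0 \<inter> V1 = {0}" using super_grading_V unfolding super_grading_def by blast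

lemma parity_decomp: obtains v0 v1 where "v0 \<in> V0" "v1 \<in> V1" "v = v0 + v1"
  using super_grading_V unfolding super_grading_def by blast

lemma Y_locality: "homog V0 V1 a \<Longrightarrow> homog V0 V1 b \<Longrightarrow>
        (\<exists>N. loc_series sc N (\<lambda>p q c. Y p a (Y q b c) - sc (psign V1 a b) (Y q b (Y p a c))))"
  using va unfolding vertex_algebra_1_def by blast

lemma even_op_psign:
  assumes ev: "even_op V0 V1 X" and a: "homog V0 V1 a" and ne: "psign V1 (X a) b \<noteq> psign V1 a b"
  shows "X a = 0"
proof -
  from ne have "(a \<in> V1) \<noteq> (X a \<in> V1)" by (auto simp: psign_def split: if_splits)
  hence "X a \<in> V0 \<inter> V1" using ev a unfolding even_op_def homog_def by blast
  thus ?thesis using V0_Int_V1 by blast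
qed

lemma der_defect_local:
  assumes X: "lin sc X" and ev: "even_op V0 V1 X" and ol: "op_local sc V0 V1 Y X"
    and ha: "homog V0 V1 a" and hb: "homog V0 V1 b"
  shows "\<exists>N. loc_series sc N (\<lambda>p q c. der_defect X a p (Y q b c) - sc (psign V1 a b) (Y q b (der_defect X a p c)))"
proof -
  let ?s = "psign V1 a b"
  obtain N1 where N1: "loc_series sc N1 (\<lambda>p q c.
        let Z = (\<lambda>w. X (Y p a w) - Y p a (X w)) in
        Z (Y q b c) - sc ?s (Y q b (Z c)))"
    using ol ha hb unfolding op_local_def by blast
  have hXa: "homog V0 V1 (X a)" using ha ev unfolding homog_def even_op_def by blast
  obtain N2 where N2: "loc_series sc N2 (\<lambda>p q c. Y p (X a) (Y q b c) - sc (psign V1 (X a) b) (Y q b (Y p (X a) c)))"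
    using Y_locality[OF hXa hb] by blast
  have E: "der_defect X a p (Y q b c) - sc ?s (Y q b (der_defect X a p c)) =
     (let Z = (\<lambda>w. X (Y p a w) - Y p a (X w)) in Z (Y q b c) - sc ?s (Y q b (Z c)))
     - (Y p (X a) (Y q b c) - sc ?s (Y q b (Y p (X a) c)))" for p q c
    by (simp add: der_defect_def Let_def Y_diff_right scale_right_diff_distrib)
  show ?thesis
  proof (cases "psign V1 (X a) b = ?s")
    case True
    have "loc_series sc (max N1 N2) (\<lambda>p q c. (let Z = (\<lambda>w. X (Y p a w) - Y p a (X w)) in Z (Y q b c) - sc ?s (Y q b (Z c)))
       - (Y p (X a) (Y q b c) - sc ?s (Y q b (Y p (X a) c))))"
      apply (rule loc_series_diff)
       apply (rule loc_series_mono[OF N1], simp)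
      using loc_series_mono[OF N2, of "max N1 N2"] True by simp
    thus ?thesis using E by (intro exI[of _ "max N1 N2"]) simp
  next
    case False
    hence "X a = 0" using even_op_psign[OF ev ha] by blast
    have "(\<lambda>p q c. der_defect X a p (Y q b c) - sc ?s (Y q b (der_defect X a p c))) =
       (\<lambda>p q c. let Z = (\<lambda>w. X (Y p a w) - Y p a (X w)) in Z (Y q b c) - sc ?s (Y q b (Z c)))"
      using E \<open>X a = 0\<close> by (simp add: fun_eq_iff)
    thus ?thesis using N1 by auto
  qed
qed

lemma der_defect_add_left:
  assumes X: "lin sc X"
  shows "der_defect X (a0 + a1) p c = der_defect X a0 p c + der_defect X a1 p c"
  unfolding der_defect_def by (simp add: Y_add_left lin_add[OF X])

lemma der_defect_add_right:
  assumes X: "lin sc X"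
  shows "der_defect X a p (c0 + c1) = der_defect X a p c0 + der_defect X a p c1"
  unfolding der_defect_def by (simp add: Y_add_right lin_add[OF X])

lemma local_op_derivation:
  assumes X: "lin sc X" and ev: "even_op V0 V1 X" and ol: "op_local sc V0 V1 Y X"
    and Xv: "X vac = 0" and XT: "\<And>v. X (T1 v) = T1 (X v)"
  shows "X (Y n a b) = Y n (X a) b + Y n a (X b)"
proof -
  have hom: "der_defect X a p b = 0" if ha: "homog V0 V1 a" and hb: "homog V0 V1 b" for a b p
  proof -
    obtain N where N: "loc_series sc N (\<lambda>p q c. der_defect X a p (Y q b c) - sc (psign V1 a b) (Y q b (der_defect X a p c)))"
      using der_defect_local[OF X ev ol ha hb] by blast
    define H where "H p q = der_defect X a p (Y q b vac)" for p q
    have L: "(\<Sum>k\<le>N. sc ((-1) ^ k * of_nat (N choose k)) (H (p - int N + int k) (q - int k))) = 0" for p q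
      using N unfolding loc_series_def H_def
      by (auto simp: der_defect_vac[OF X XT Xv] dest: spec[of _ vac])
    have neg: "H p q = 0" if "q < 0" for p q
      using that by (simp add: H_def Y_neg_vac der_defect_def lin_zero[OF X])
    have "H p 0 = 0" by (rule loc_relation_vanishes[OF L neg])
    thus ?thesis by (simp add: H_def Y_zero_vac)
  qed
  obtain a0 a1 where a: "a0 \<in> V0" "a1 \<in> V1" "a = a0 + a1" by (rule parity_decomp)
  obtain b0 b1 where b: "b0 \<in> V0" "b1 \<in> V1" "b = b0 + b1" by (rule parity_decomp)
  have h: "homog V0 V1 a0" "homog V0 V1 a1" "homog V0 V1 b0" "homog V0 V1 b1"
    using a b unfolding homog_def by auto
  have "der_defect X a n b = 0"
    unfolding a(3) b(3) der_defect_add_left[OF X] der_defect_add_right[OF X] using hom h by simp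
  thus ?thesis unfolding der_defect_def by (simp add: algebra_simps)
qed

end

section \<open>Exponentials of locally finite operators\<close>

lemma summable_exp_bound: "summable (\<lambda>k. C * R ^ k / fact k :: real)"
proof -
  have "summable (\<lambda>k. C * (inverse (fact k) * R ^ k) :: real)"
    by (rule summable_mult[OF summable_exp])
  thus ?thesis by (simp add: field_simps)
qed

lemma sum_suminf_mult_Cauchy:
  fixes \<alpha> \<beta> :: "'b \<Rightarrow> nat \<Rightarrow> complex"
  assumes "\<And>b. b \<in> B \<Longrightarrow> summable (\<lambda>k. norm (\<alpha> b k))" "\<And>b. b \<in> B \<Longrightarrow> summable (\<lambda>k. norm (\<beta> b k))"
  shows "(\<Sum>b\<in>B. suminf (\<alpha> b) * suminf (\<beta> b)) = suminf (\<lambda>n. \<Sum>b\<in>B. \<Sum>k\<le>n. \<alpha> b k * \<beta> b (n - k))"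
proof -
  have "(\<lambda>n. \<Sum>b\<in>B. \<Sum>k\<le>n. \<alpha> b k * \<beta> b (n - k)) sums (\<Sum>b\<in>B. suminf (\<alpha> b) * suminf (\<beta> b))"
    by (rule sums_sum) (rule Cauchy_product_sums; simp add: assms)
  thus ?thesis by (rule sums_unique)
qed

lemma inverse_fact_mult_binomial:
  assumes "k \<le> n"
  shows "1 / (fact k * fact (n - k)) = (of_nat (n choose k) / fact n :: complex)"
  using binomial_fact[OF assms, where 'a=complex] by (simp add: field_simps)

lemma alternating_inverse_fact_sum: "(\<Sum>k\<le>n. (-1)^k / (fact k * fact (n - k)) :: complex) = (if n = 0 then 1 else 0)"
proof (cases "n = 0")
  case False
  have "(\<Sum>k\<le>n. (-1)^k / (fact k * fact (n - k)) :: complex) = (\<Sum>k\<le>n. (-1)^k * of_nat (n choose k) / fact n)"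
  proof (rule sum.cong[OF refl])
    fix k assume "k \<in> {..n}"
    hence "1 / (fact k * fact (n - k)) = (of_nat (n choose k) / fact n :: complex)" by (intro inverse_fact_mult_binomial) simp
    hence "(-1)^k * (1 / (fact k * fact (n - k))) = ((-1)^k * (of_nat (n choose k) / fact n) :: complex)" by simp
    thus "(-1)^k / (fact k * fact (n - k)) = ((-1)^k * of_nat (n choose k) / fact n :: complex)"
      by (simp only: times_divide_eq_right mult_1_right)
  qed
  also have "\<dots> = (\<Sum>k\<le>n. (-1)^k * of_nat (n choose k)) / fact n"
    by (simp add: sum_divide_distrib)
  also have "\<dots> = 0" using False by (simp add: choose_alternating_sum)
  finally show ?thesis using False by simp
qed simp

context complex_vs
begin

lemma lin_span_image:
  assumes f: "lin sc f" and fB: "\<And>b. b \<in> B \<Longrightarrow> f b \<in> span B2" and x: "x \<in> span B"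
  shows "f x \<in> span B2"
  using x
proof (induction rule: span_induct_alt)
  case base thus ?case by (simp add: lin_zero[OF f] span_zero)
next
  case (step c x y) thus ?case by (simp add: lin_add[OF f] lin_scale[OF f] span_add span_scale fB)
qed

lemma representation_expand:
  assumes B: "finite B" "independent B" and x: "x \<in> span B"
  shows "x = (\<Sum>b\<in>B. sc (representation B x b) b)"
  using sum_representation_eq[OF B(2) x B(1)] by simp

lemma representation_lin_image:
  assumes f: "lin sc f" and B: "finite B" "independent B" and x: "x \<in> span B"
    and B2: "independent B2" and fB: "\<And>b. b \<in> B \<Longrightarrow> f b \<in> span B2"
  shows "representation B2 (f x) b2 = (\<Sum>b\<in>B. representation B x b * representation B2 (f b) b2)"
proof -
  have "f x = (\<Sum>b\<in>B. sc (representation B x b) (f b))"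
    by (subst representation_expand[OF B x]) (simp add: lin_sum[OF f] lin_scale[OF f])
  hence "representation B2 (f x) = representation B2 (\<Sum>b\<in>B. sc (representation B x b) (f b))" by simp
  also have "\<dots> = (\<lambda>b2. \<Sum>b\<in>B. representation B2 (sc (representation B x b) (f b)) b2)"
    by (rule representation_sum[OF B2]) (simp add: span_scale fB)
  finally show ?thesis
    by (simp add: representation_scale[OF B2 fB])
qed

lemma representation_comb:
  assumes B: "finite B" "independent B" and b: "b \<in> B"
  shows "representation B (\<Sum>b'\<in>B. sc (c b') b') b = c b"
proof -
  have "representation B (\<Sum>b'\<in>B. sc (c b') b') = (\<lambda>b. \<Sum>b'\<in>B. representation B (sc (c b') b') b)"
    by (rule representation_sum[OF B(2)]) (simp add: span_scale span_base)
  also have "\<dots> = (\<lambda>b. \<Sum>b'\<in>B. c b' * (if b = b' then 1 else 0))"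
    by (simp add: representation_scale[OF B(2) span_base] representation_basis[OF B(2)])
  finally show ?thesis using b B(1) by (simp add: if_distrib cong: if_cong)
qed

lemma representation_eqI:
  assumes B: "finite B" "independent B" and x: "x \<in> span B" and y: "y \<in> span B"
    and eq: "\<And>b. b \<in> B \<Longrightarrow> representation B x b = representation B y b"
  shows "x = y"
  using representation_expand[OF B x] representation_expand[OF B y] eq by (metis (no_types, lifting) sum.cong)

lemma representation_sum_span:
  assumes B: "independent B" and y: "\<And>k. k \<in> K \<Longrightarrow> y k \<in> span B"
  shows "representation B (\<Sum>k\<in>K. y k) b = (\<Sum>k\<in>K. representation B (y k) b)"
  using representation_sum[OF B, of K y] y by simp

lemma representation_sum_scale:
  assumes B: "independent B" and y: "\<And>k. k \<in> K \<Longrightarrow> y k \<in> span B"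
  shows "representation B (\<Sum>k\<in>K. sc (c k) (y k)) b = (\<Sum>k\<in>K. c k * representation B (y k) b)"
proof -
  have "representation B (\<Sum>k\<in>K. sc (c k) (y k)) = (\<lambda>b. \<Sum>k\<in>K. representation B (sc (c k) (y k)) b)"
    by (rule representation_sum[OF B]) (simp add: span_scale y)
  thus ?thesis by (simp add: representation_scale[OF B y])
qed

lemma finite_basis_of_span:
  assumes G: "finite G"
  obtains B where "finite B" "independent B" "span B = span G"
proof -
  obtain B where B: "B \<subseteq> span G" "independent B" "span G \<subseteq> span B"
    using maximal_independent_subset[of "span G"] by blast
  have "finite B" using independent_span_bound[OF G B(2)] B(1) by blast
  moreover have "span B = span G"
    using B by (metis span_minimal span_span subspace_span subset_antisym)
  ultimately show ?thesis using B that by blast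
qed

definition coord_suminf :: "'v set \<Rightarrow> (nat \<Rightarrow> 'v) \<Rightarrow> 'v" where
  "coord_suminf B x = (\<Sum>b\<in>B. sc (suminf (\<lambda>k. representation B (x k) b)) b)"

lemma coord_suminf_span: "finite B \<Longrightarrow> coord_suminf B x \<in> span B"
  unfolding coord_suminf_def by (intro span_sum span_scale span_base)

lemma representation_coord_suminf: "finite B \<Longrightarrow> independent B \<Longrightarrow> b \<in> B \<Longrightarrow>
    representation B (coord_suminf B x) b = suminf (\<lambda>k. representation B (x k) b)"
  unfolding coord_suminf_def by (rule representation_comb)

lemma lin_coord_suminf: "lin sc f \<Longrightarrow> f (coord_suminf B x) = (\<Sum>b\<in>B. sc (suminf (\<lambda>k. representation B (x k) b)) (f b))"
  unfolding coord_suminf_def by (simp add: lin_sum lin_scale)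

text \<open>Both sides equal the coordinatewise sum in a basis C extending B, because the coordinates in
C of the terms x k are finite linear combinations of their coordinates in B2.\<close>
lemma coord_suminf_basis_change:
  assumes B: "finite B" "independent B" and B2: "finite B2" "independent B2"
    and xB: "\<And>k. x k \<in> span B" and xB2: "\<And>k. x k \<in> span B2"
    and sB2: "\<And>b2. b2 \<in> B2 \<Longrightarrow> summable (\<lambda>k. representation B2 (x k) b2)"
  shows "coord_suminf B x = coord_suminf B2 x"
proof -
  have BS: "B \<subseteq> span (B \<union> B2)" using span_superset[of "B \<union> B2"] by blast
  obtain C where C: "B \<subseteq> C" "C \<subseteq> span (B \<union> B2)" "independent C" "span (B \<union> B2) \<subseteq> span C"
    by (rule maximal_independent_subset_extend[OF BS B(2)])
  have fBB: "finite (B \<union> B2)" using B(1) B2(1) by simp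
  have fC: "finite C" using independent_span_bound[OF fBB C(3) C(2)] by simp
  have repC: "representation C (x k) = representation B (x k)" for k
    by (rule representation_extend[OF C(3) xB C(1)])
  have "coord_suminf C x = (\<Sum>c\<in>C. sc (suminf (\<lambda>k. representation B (x k) c)) c)"
    unfolding coord_suminf_def repC ..
  also have "\<dots> = coord_suminf B x"
    unfolding coord_suminf_def
  proof (rule sum.mono_neutral_right[OF fC C(1)], intro ballI)
    fix c assume "c \<in> C - B"
    hence "representation B (x k) c = 0" for k using representation_ne_zero by blast
    thus "sc (\<Sum>k. representation B (x k) c) c = 0" by simp
  qed
  finally have 1: "coord_suminf C x = coord_suminf B x" .
  have B2C: "b2 \<in> span C" if "b2 \<in> B2" for b2 using that C(4) span_superset by blast
  have repC2: "representation C (x k) c = (\<Sum>b2\<in>B2. representation B2 (x k) b2 * representation C b2 c)" for k c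
    using representation_lin_image[OF lin_id B2 xB2 C(3)] B2C by simp
  have "coord_suminf C x = (\<Sum>c\<in>C. sc (\<Sum>b2\<in>B2. suminf (\<lambda>k. representation B2 (x k) b2) * representation C b2 c) c)"
    unfolding coord_suminf_def repC2
    by (intro sum.cong refl arg_cong2[where f=sc])
       (simp add: suminf_sum summable_mult2 sB2 suminf_mult2)
  also have "\<dots> = (\<Sum>c\<in>C. \<Sum>b2\<in>B2. sc (suminf (\<lambda>k. representation B2 (x k) b2)) (sc (representation C b2 c) c))"
    by (simp add: scale_sum_left)
  also have "\<dots> = (\<Sum>b2\<in>B2. \<Sum>c\<in>C. sc (suminf (\<lambda>k. representation B2 (x k) b2)) (sc (representation C b2 c) c))"
    by (rule sum.swap)
  also have "\<dots> = (\<Sum>b2\<in>B2. sc (suminf (\<lambda>k. representation B2 (x k) b2)) (\<Sum>c\<in>C. sc (representation C b2 c) c))"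
    by (simp add: scale_sum_right)
  also have "\<dots> = coord_suminf B2 x"
    unfolding coord_suminf_def using representation_expand[OF fC C(3) B2C] by simp
  finally show ?thesis using 1 by simp
qed

definition inv_basis :: "('v \<Rightarrow> 'v) \<Rightarrow> 'v set \<Rightarrow> bool" where
  "inv_basis f B \<longleftrightarrow> finite B \<and> independent B \<and> (\<forall>b\<in>B. f b \<in> span B)"

lemma inv_basis_span: "lin sc f \<Longrightarrow> inv_basis f B \<Longrightarrow> x \<in> span B \<Longrightarrow> f x \<in> span B"
  unfolding inv_basis_def using lin_span_image by blast

lemma inv_basis_funpow_span: "lin sc f \<Longrightarrow> inv_basis f B \<Longrightarrow> x \<in> span B \<Longrightarrow> (f ^^ k) x \<in> span B"
  by (induction k) (simp_all add: inv_basis_span)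

lemma inv_basis_uminus: "lin sc f \<Longrightarrow> inv_basis f B \<Longrightarrow> inv_basis (\<lambda>x. - f x) B"
  unfolding inv_basis_def by (simp add: span_neg)

lemma inv_basis_exists:
  assumes f: "lin sc f" and G: "finite G" and inv: "f ` span G \<subseteq> span G"
  obtains B where "inv_basis f B" "span B = span G"
proof -
  obtain B where B: "finite B" "independent B" "span B = span G" by (rule finite_basis_of_span[OF G])
  have "inv_basis f B" unfolding inv_basis_def using B inv span_base by (metis image_subset_iff)
  thus ?thesis using B that by blast
qed

lemma locally_finite_common_span:
  assumes lin: "\<And>i. i \<in> I \<Longrightarrow> lin sc (L i)"
    and lf: "\<And>v. \<exists>B. finite B \<and> v \<in> span B \<and> (\<forall>i\<in>I. L i ` span B \<subseteq> span B)"
    and G: "finite G"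
  shows "\<exists>B. finite B \<and> G \<subseteq> span B \<and> (\<forall>i\<in>I. L i ` span B \<subseteq> span B)"
  using G
proof (induction G rule: finite_induct)
  case empty
  show ?case by (intro exI[of _ "{}"]) (auto simp: lin_zero[OF lin])
next
  case (insert g G)
  obtain B1 where B1: "finite B1" "G \<subseteq> span B1" "\<forall>i\<in>I. L i ` span B1 \<subseteq> span B1" using insert.IH by blast
  obtain B2 where B2: "finite B2" "g \<in> span B2" "\<forall>i\<in>I. L i ` span B2 \<subseteq> span B2" using lf by blast
  have s1: "span B1 \<subseteq> span (B1 \<union> B2)" "span B2 \<subseteq> span (B1 \<union> B2)" by (simp_all add: span_mono)
  have "L i x \<in> span (B1 \<union> B2)" if i: "i \<in> I" and x: "x \<in> span (B1 \<union> B2)" for i x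
  proof -
    obtain y z where "x = y + z" "y \<in> span B1" "z \<in> span B2" using x unfolding span_Un by blast
    hence "L i x = L i y + L i z" "L i y \<in> span B1" "L i z \<in> span B2"
      using lin_add[OF lin[OF i]] B1(3) B2(3) i by (auto simp: image_subset_iff)
    thus ?thesis using s1 span_add by (metis subsetD)
  qed
  thus ?case using B1 B2 s1 by (intro exI[of _ "B1 \<union> B2"]) auto
qed

definition coord_norm :: "'v set \<Rightarrow> 'v \<Rightarrow> real" where
  "coord_norm B y = (\<Sum>b\<in>B. norm (representation B y b))"

lemma coord_norm_nonneg: "0 \<le> coord_norm B y" unfolding coord_norm_def by (simp add: sum_nonneg)

lemma norm_coord_le_coord_norm: "finite B \<Longrightarrow> norm (representation B y b) \<le> coord_norm B y"
proof (cases "b \<in> B")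
  case True
  assume "finite B"
  thus ?thesis unfolding coord_norm_def using True by (intro member_le_sum) auto
next
  case False
  hence "representation B y b = 0" using representation_ne_zero by blast
  thus ?thesis using coord_norm_nonneg by simp
qed

definition coord_bound :: "('v \<Rightarrow> 'v) \<Rightarrow> 'v set \<Rightarrow> real" where
  "coord_bound f B = (\<Sum>b\<in>B. coord_norm B (f b))"

lemma coord_norm_image:
  assumes f: "lin sc f" and inv: "inv_basis f B" and y: "y \<in> span B"
  shows "coord_norm B (f y) \<le> coord_bound f B * coord_norm B y"
proof -
  have B: "finite B" "independent B" and fB: "\<And>b. b \<in> B \<Longrightarrow> f b \<in> span B" using inv unfolding inv_basis_def by auto
  have "coord_norm B (f y) = (\<Sum>b'\<in>B. norm (\<Sum>b\<in>B. representation B y b * representation B (f b) b'))"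
    unfolding coord_norm_def using representation_lin_image[OF f B y B(2) fB] by simp
  also have "\<dots> \<le> (\<Sum>b'\<in>B. \<Sum>b\<in>B. norm (representation B y b) * norm (representation B (f b) b'))"
    by (intro sum_mono order_trans[OF norm_sum]) (simp add: norm_mult)
  also have "\<dots> = (\<Sum>b\<in>B. norm (representation B y b) * coord_norm B (f b))"
    unfolding coord_norm_def by (subst sum.swap) (simp add: sum_distrib_left)
  also have "\<dots> \<le> (\<Sum>b\<in>B. norm (representation B y b) * coord_bound f B)"
  proof (intro sum_mono mult_left_mono)
    fix b assume "b \<in> B"
    thus "coord_norm B (f b) \<le> coord_bound f B" unfolding coord_bound_def using B(1) coord_norm_nonneg by (intro member_le_sum) auto
  qed simp
  also have "\<dots> = coord_bound f B * coord_norm B y" unfolding coord_norm_def by (simp add: sum_distrib_left mult.commute)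
  finally show ?thesis .
qed

lemma coord_bound_nonneg: "0 \<le> coord_bound f B" unfolding coord_bound_def by (simp add: sum_nonneg coord_norm_nonneg)

lemma coord_norm_funpow:
  assumes f: "lin sc f" and inv: "inv_basis f B" and y: "y \<in> span B"
  shows "coord_norm B ((f ^^ k) y) \<le> coord_bound f B ^ k * coord_norm B y"
proof (induction k)
  case 0 thus ?case by simp
next
  case (Suc k)
  have "coord_norm B ((f ^^ Suc k) y) \<le> coord_bound f B * coord_norm B ((f ^^ k) y)"
    using coord_norm_image[OF f inv inv_basis_funpow_span[OF f inv y]] by simp
  also have "\<dots> \<le> coord_bound f B * (coord_bound f B ^ k * coord_norm B y)"
    by (rule mult_left_mono[OF Suc coord_bound_nonneg])
  finally show ?case by (simp add: mult.assoc)
qed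

lemma summable_exp_coords:
  assumes f: "lin sc f" and inv: "inv_basis f B" and y: "y \<in> span B"
  shows "summable (\<lambda>k. norm (representation B ((f ^^ k) y) b / of_nat (fact k)))"
proof (rule summable_comparison_test'[OF summable_exp_bound[of "coord_norm B y" "coord_bound f B"]])
  fix k
  have fB: "finite B" using inv unfolding inv_basis_def by simp
  have "norm (representation B ((f ^^ k) y) b / of_nat (fact k)) = norm (representation B ((f ^^ k) y) b) / fact k"
    by (simp add: norm_divide)
  also have "\<dots> \<le> (coord_bound f B ^ k * coord_norm B y) / fact k"
    by (intro divide_right_mono order_trans[OF norm_coord_le_coord_norm[OF fB] coord_norm_funpow[OF f inv y]]) simp
  finally show "norm (norm (representation B ((f ^^ k) y) b / of_nat (fact k))) \<le> coord_norm B y * coord_bound f B ^ k / fact k"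
    by (simp add: mult.commute)
qed

definition exp_term :: "('v \<Rightarrow> 'v) \<Rightarrow> 'v \<Rightarrow> nat \<Rightarrow> 'v" where
  "exp_term f v k = sc (1 / of_nat (fact k)) ((f ^^ k) v)"

lemma representation_exp_term:
  assumes f: "lin sc f" and inv: "inv_basis f B" and v: "v \<in> span B"
  shows "representation B (exp_term f v k) b = representation B ((f ^^ k) v) b / of_nat (fact k)"
  unfolding exp_term_def using inv inv_basis_funpow_span[OF f inv v] unfolding inv_basis_def
  by (simp add: representation_scale)

lemma summable_exp_term:
  assumes f: "lin sc f" and inv: "inv_basis f B" and v: "v \<in> span B"
  shows "summable (\<lambda>k. representation B (exp_term f v k) b)"
  unfolding representation_exp_term[OF f inv v] by (rule summable_norm_cancel[OF summable_exp_coords[OF f inv v]])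

lemma representation_exp_partial_sum:
  assumes f: "lin sc f" and inv: "inv_basis f B" and v: "v \<in> span B"
  shows "representation B (\<Sum>k<N. exp_term f v k) b = (\<Sum>k<N. representation B (exp_term f v k) b)"
  using inv inv_basis_funpow_span[OF f inv v] unfolding inv_basis_def exp_term_def
  by (intro representation_sum_span) (auto intro: span_scale)

lemma exp_partial_sums_converge:
  assumes f: "lin sc f" and inv: "inv_basis f B" and v: "v \<in> span B" and b: "b \<in> B"
  shows "(\<lambda>N. representation B (\<Sum>k<N. sc (1 / of_nat (fact k)) ((f ^^ k) v)) b)
           \<longlonglongrightarrow> representation B (coord_suminf B (exp_term f v)) b"
proof -
  have B: "finite B" "independent B" using inv unfolding inv_basis_def by auto
  show ?thesis
    using summable_LIMSEQ[OF summable_exp_term[OF f inv v, of b]]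
    unfolding representation_coord_suminf[OF B b] representation_exp_partial_sum[OF f inv v, symmetric]
    by (simp add: exp_term_def)
qed

lemma expop_eq_coord_suminf:
  assumes f: "lin sc f" and inv: "inv_basis f B" and v: "v \<in> span B"
  shows "expop sc f v = coord_suminf B (exp_term f v)"
  unfolding expop_def
proof (rule the_equality)
  have B: "finite B" "independent B" using inv unfolding inv_basis_def by auto
  show "\<exists>B'. finite B' \<and> \<not> dependent B' \<and> v \<in> span B' \<and> f ` span B' \<subseteq> span B' \<and> coord_suminf B (exp_term f v) \<in> span B' \<and>
      (\<forall>b\<in>B'. (\<lambda>N. representation B' (\<Sum>k<N. sc (1 / of_nat (fact k)) ((f ^^ k) v)) b) \<longlonglongrightarrow> representation B' (coord_suminf B (exp_term f v)) b)"
    using B v inv_basis_span[OF f inv] exp_partial_sums_converge[OF f inv v]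
    by (intro exI[of _ B]) (auto intro: coord_suminf_span)
next
  fix w assume "\<exists>B'. finite B' \<and> \<not> dependent B' \<and> v \<in> span B' \<and> f ` span B' \<subseteq> span B' \<and> w \<in> span B' \<and>
      (\<forall>b\<in>B'. (\<lambda>N. representation B' (\<Sum>k<N. sc (1 / of_nat (fact k)) ((f ^^ k) v)) b) \<longlonglongrightarrow> representation B' w b)"
  then obtain B2 where B2: "finite B2" "independent B2" "v \<in> span B2" "f ` span B2 \<subseteq> span B2" "w \<in> span B2"
    and conv: "\<And>b. b \<in> B2 \<Longrightarrow> (\<lambda>N. representation B2 (\<Sum>k<N. sc (1 / of_nat (fact k)) ((f ^^ k) v)) b) \<longlonglongrightarrow> representation B2 w b"
    by blast
  have inv2: "inv_basis f B2" unfolding inv_basis_def using B2 span_base by blast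
  have "w = coord_suminf B2 (exp_term f v)"
  proof (rule representation_eqI[OF B2(1,2) B2(5) coord_suminf_span[OF B2(1)]])
    fix b assume "b \<in> B2"
    thus "representation B2 w b = representation B2 (coord_suminf B2 (exp_term f v)) b"
      using conv exp_partial_sums_converge[OF f inv2 B2(3)] LIMSEQ_unique by blast
  qed
  also have "\<dots> = coord_suminf B (exp_term f v)"
    using inv2 inv inv_basis_funpow_span[OF f inv2 B2(3)] inv_basis_funpow_span[OF f inv v]
      summable_exp_term[OF f inv v]
    unfolding inv_basis_def exp_term_def by (intro coord_suminf_basis_change) (auto intro: span_scale)
  finally show "w = coord_suminf B (exp_term f v)" .
qed

lemma funpow_uminus: "lin sc f \<Longrightarrow> ((\<lambda>x. - f x) ^^ k) y = sc ((-1) ^ k) ((f ^^ k) y)"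
  by (induction k) (simp_all add: lin_scale lin_funpow)

lemma representation_funpow:
  assumes f: "lin sc f" and inv: "inv_basis f B" and y: "y \<in> span B"
  shows "representation B ((f ^^ k) y) b' = (\<Sum>b\<in>B. representation B y b * representation B ((f ^^ k) b) b')"
proof -
  have B: "finite B" "independent B" using inv unfolding inv_basis_def by auto
  have fB: "\<And>b. b \<in> B \<Longrightarrow> (f ^^ k) b \<in> span B" using inv_basis_funpow_span[OF f inv span_base] by blast
  show ?thesis by (rule representation_lin_image[OF lin_funpow[OF f] B y B(2) fB])
qed

text \<open>The n-th Cauchy coefficient of exp(-f) exp(f) v: since f^k f^(n-k) = f^n, it is
sum_k (-1)^k / (k! (n-k)!) times the coordinate of f^n v, which vanishes for n > 0.\<close>
lemma exp_uminus_Cauchy_coeff: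
  assumes f: "lin sc f" and inv: "inv_basis f B" and v: "v \<in> span B"
  shows "(\<Sum>b\<in>B. \<Sum>k\<le>n. ((-1)^k * representation B ((f ^^ k) b) b' / of_nat (fact k))
            * (representation B ((f ^^ (n - k)) v) b / of_nat (fact (n - k))))
         = (if n = 0 then representation B v b' else 0)"
proof -
  have "(\<Sum>b\<in>B. \<Sum>k\<le>n. ((-1)^k * representation B ((f ^^ k) b) b' / of_nat (fact k))
            * (representation B ((f ^^ (n - k)) v) b / of_nat (fact (n - k))))
      = (\<Sum>k\<le>n. (-1)^k / (fact k * fact (n - k)) * (\<Sum>b\<in>B. representation B ((f ^^ (n - k)) v) b * representation B ((f ^^ k) b) b'))"
    by (subst sum.swap) (simp add: sum_distrib_left mult_ac)
  also have "\<dots> = (\<Sum>k\<le>n. (-1)^k / (fact k * fact (n - k)) * representation B ((f ^^ n) v) b')"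
  proof (rule sum.cong[OF refl])
    fix k assume "k \<in> {..n}"
    hence "(f ^^ k) ((f ^^ (n - k)) v) = (f ^^ n) v"
      by (metis funpow_add le_add_diff_inverse atMost_iff comp_apply)
    thus "(-1)^k / (fact k * fact (n - k)) * (\<Sum>b\<in>B. representation B ((f ^^ (n - k)) v) b * representation B ((f ^^ k) b) b')
        = (-1)^k / (fact k * fact (n - k)) * representation B ((f ^^ n) v) b'"
      using representation_funpow[OF f inv inv_basis_funpow_span[OF f inv v], of k "n - k" b'] by simp
  qed
  also have "\<dots> = (if n = 0 then representation B v b' else 0)"
    unfolding sum_distrib_right[symmetric] alternating_inverse_fact_sum by simp
  finally show ?thesis .
qed

lemma expop_uminus_expop:
  assumes f: "lin sc f" and inv: "inv_basis f B" and v: "v \<in> span B"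
  shows "expop sc (\<lambda>x. - f x) (expop sc f v) = v"
proof -
  let ?g = "\<lambda>x. - f x"
  have g: "lin sc ?g" by (rule lin_uminus[OF f])
  have invg: "inv_basis ?g B" by (rule inv_basis_uminus[OF f inv])
  have B: "finite B" "independent B" using inv unfolding inv_basis_def by auto
  define w where "w = coord_suminf B (exp_term f v)"
  have w: "w \<in> span B" unfolding w_def by (rule coord_suminf_span[OF B(1)])
  have E1: "expop sc f v = w" unfolding w_def by (rule expop_eq_coord_suminf[OF f inv v])
  have E2: "expop sc ?g w = coord_suminf B (exp_term ?g w)" by (rule expop_eq_coord_suminf[OF g invg w])
  define \<alpha> where "\<alpha> b' b k = (-1)^k * representation B ((f ^^ k) b) b' / of_nat (fact k)" for b' b k
  define \<beta> where "\<beta> b i = representation B ((f ^^ i) v) b / of_nat (fact i)" for b i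
  have repw: "representation B w b = suminf (\<beta> b)" if "b \<in> B" for b
    unfolding w_def representation_coord_suminf[OF B that] \<beta>_def representation_exp_term[OF f inv v] ..
  have s\<beta>: "summable (\<lambda>k. norm (\<beta> b k))" for b unfolding \<beta>_def by (rule summable_exp_coords[OF f inv v])
  have s\<alpha>: "summable (\<lambda>k. norm (\<alpha> b' b k))" if "b \<in> B" for b b'
    using summable_exp_coords[OF f inv span_base[OF that], of b'] unfolding \<alpha>_def by (simp add: norm_mult norm_divide norm_power)
  show ?thesis
    unfolding E1 E2
  proof (rule representation_eqI[OF B coord_suminf_span[OF B(1)] v])
    fix b' assume b': "b' \<in> B"
    have "representation B (coord_suminf B (exp_term ?g w)) b' = suminf (\<lambda>k. representation B ((?g ^^ k) w) b' / of_nat (fact k))"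
      unfolding representation_coord_suminf[OF B b'] representation_exp_term[OF g invg w] ..
    also have "\<dots> = suminf (\<lambda>k. \<Sum>b\<in>B. \<alpha> b' b k * suminf (\<beta> b))"
    proof (rule arg_cong[where f=suminf], rule ext)
      fix k
      have "representation B ((?g ^^ k) w) b' = (-1)^k * representation B ((f ^^ k) w) b'"
        unfolding funpow_uminus[OF f] using inv_basis_funpow_span[OF f inv w] B by (simp add: representation_scale)
      thus "representation B ((?g ^^ k) w) b' / of_nat (fact k) = (\<Sum>b\<in>B. \<alpha> b' b k * suminf (\<beta> b))"
        unfolding representation_funpow[OF f inv w] \<alpha>_def using repw
        by (simp add: sum_distrib_left sum_divide_distrib mult_ac)
    qed
    also have "\<dots> = (\<Sum>b\<in>B. suminf (\<alpha> b' b) * suminf (\<beta> b))"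
      using s\<alpha> by (simp add: suminf_sum summable_mult2 summable_norm_cancel suminf_mult2)
    also have "\<dots> = suminf (\<lambda>n. \<Sum>b\<in>B. \<Sum>k\<le>n. \<alpha> b' b k * \<beta> b (n - k))"
      by (rule sum_suminf_mult_Cauchy) (use s\<alpha> s\<beta> in auto)
    also have "\<dots> = suminf (\<lambda>n. if n = 0 then representation B v b' else 0)"
      unfolding \<alpha>_def \<beta>_def exp_uminus_Cauchy_coeff[OF f inv v] ..
    also have "\<dots> = representation B v b'"
      using sums_single[of 0 "\<lambda>_. representation B v b'"] sums_unique by fastforce
    finally show "representation B (coord_suminf B (exp_term ?g w)) b' = representation B v b'" .
  qed
qed

lemma expop_add:
  assumes f: "lin sc f" and inv: "inv_basis f B" and x: "x \<in> span B" and y: "y \<in> span B"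
  shows "expop sc f (x + y) = expop sc f x + expop sc f y"
proof -
  have B: "finite B" "independent B" using inv unfolding inv_basis_def by auto
  have xy: "x + y \<in> span B" using x y by (rule span_add)
  show ?thesis
    unfolding expop_eq_coord_suminf[OF f inv x] expop_eq_coord_suminf[OF f inv y] expop_eq_coord_suminf[OF f inv xy]
  proof (rule representation_eqI[OF B coord_suminf_span[OF B(1)] span_add[OF coord_suminf_span[OF B(1)] coord_suminf_span[OF B(1)]]])
    fix b assume b: "b \<in> B"
    have "representation B (coord_suminf B (exp_term f x) + coord_suminf B (exp_term f y)) b
       = representation B (coord_suminf B (exp_term f x)) b + representation B (coord_suminf B (exp_term f y)) b"
      using representation_add[OF B(2) coord_suminf_span[OF B(1)] coord_suminf_span[OF B(1)]] by simp
    also have "\<dots> = suminf (\<lambda>k. representation B (exp_term f x k) b + representation B (exp_term f y k) b)"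
      unfolding representation_coord_suminf[OF B b] by (rule suminf_add[OF summable_exp_term[OF f inv x] summable_exp_term[OF f inv y]])
    also have "\<dots> = suminf (\<lambda>k. representation B (exp_term f (x + y) k) b)"
      unfolding representation_exp_term[OF f inv x] representation_exp_term[OF f inv y] representation_exp_term[OF f inv xy]
      using inv_basis_funpow_span[OF f inv x] inv_basis_funpow_span[OF f inv y]
      by (simp add: lin_add[OF lin_funpow[OF f]] representation_add[OF B(2)] add_divide_distrib)
    also have "\<dots> = representation B (coord_suminf B (exp_term f (x + y))) b"
      unfolding representation_coord_suminf[OF B b] ..
    finally show "representation B (coord_suminf B (exp_term f (x + y))) b = representation B (coord_suminf B (exp_term f x) + coord_suminf B (exp_term f y)) b"
      by simp
  qed
qed

end

fun kpow :: "nat set \<Rightarrow> (nat \<Rightarrow> nat \<Rightarrow> complex) \<Rightarrow> nat \<Rightarrow> nat \<Rightarrow> nat \<Rightarrow> complex" where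
  "kpow I K 0 e g = (if e = g then 1 else 0)"
| "kpow I K (Suc j) e g = (\<Sum>d\<in>I. K e d * kpow I K j d g)"

lemma norm_kpow_le:
  assumes "finite I" "e \<in> I"
  shows "norm (kpow I K j e g) \<le> (1 + (\<Sum>e\<in>I. \<Sum>d\<in>I. norm (K e d))) ^ j"
  using assms(2)
proof (induction j arbitrary: e)
  case 0 thus ?case by simp
next
  case (Suc j)
  let ?N = "\<Sum>e\<in>I. \<Sum>d\<in>I. norm (K e d)"
  have N0: "0 \<le> ?N" by (simp add: sum_nonneg)
  have P: "0 \<le> (1 + ?N) ^ j" using N0 by simp
  have "norm (kpow I K (Suc j) e g) \<le> (\<Sum>d\<in>I. norm (K e d) * (1 + ?N) ^ j)"
    by (simp, rule order_trans[OF norm_sum], rule sum_mono)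
       (simp add: norm_mult Suc.IH mult_left_mono)
  also have "\<dots> = (\<Sum>d\<in>I. norm (K e d)) * (1 + ?N) ^ j" by (simp add: sum_distrib_right)
  also have "\<dots> \<le> ?N * (1 + ?N) ^ j"
    by (rule mult_right_mono[OF _ P]) (use assms Suc.prems in \<open>auto intro!: member_le_sum[where f="\<lambda>e. \<Sum>d\<in>I. norm (K e d)"] sum_nonneg\<close>)
  also have "\<dots> \<le> (1 + ?N) * (1 + ?N) ^ j" by (rule mult_right_mono) (use N0 in auto)
  finally show ?case by simp
qed

lemma summable_kpow:
  assumes "finite I" "e \<in> I"
  shows "summable (\<lambda>j. norm (kpow I K j e g / of_nat (fact j)))"
proof (rule summable_comparison_test'[OF summable_exp_bound[of 1 "1 + (\<Sum>e\<in>I. \<Sum>d\<in>I. norm (K e d))"]])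
  fix j
  show "norm (norm (kpow I K j e g / of_nat (fact j))) \<le> 1 * (1 + (\<Sum>e\<in>I. \<Sum>d\<in>I. norm (K e d))) ^ j / fact j"
    using norm_kpow_le[OF assms, of K j g] by (simp add: norm_divide divide_right_mono)
qed

context complex_vs
begin

lemma kpow_Suc_sum:
  assumes I: "finite I"
  shows "(\<Sum>d\<in>I. sc (kpow I K j d g) (\<Sum>e\<in>I. sc (K e d) (T e y))) = (\<Sum>e\<in>I. sc (kpow I K (Suc j) e g) (T e y))"
proof -
  have "(\<Sum>d\<in>I. sc (kpow I K j d g) (\<Sum>e\<in>I. sc (K e d) (T e y))) = (\<Sum>d\<in>I. \<Sum>e\<in>I. sc (K e d * kpow I K j d g) (T e y))"
    by (simp add: scale_sum_right mult.commute)
  also have "\<dots> = (\<Sum>e\<in>I. \<Sum>d\<in>I. sc (K e d * kpow I K j d g) (T e y))" by (rule sum.swap)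
  also have "\<dots> = (\<Sum>e\<in>I. sc (kpow I K (Suc j) e g) (T e y))" by (simp add: scale_sum_left)
  finally show ?thesis .
qed

lemma funpow_intertwine:
  assumes I: "finite I" and f: "lin sc f" and T: "\<And>d. d \<in> I \<Longrightarrow> lin sc (T d)"
    and rel: "\<And>d x. d \<in> I \<Longrightarrow> f (T d x) = T d (f x) + (\<Sum>e\<in>I. sc (K e d) (T e x))"
    and g: "g \<in> I"
  shows "(f ^^ n) (T g x) = (\<Sum>j\<le>n. sc (of_nat (n choose j)) (\<Sum>d\<in>I. sc (kpow I K j d g) (T d ((f ^^ (n - j)) x))))"
proof (induction n)
  case 0
  have "(\<Sum>d\<in>I. sc (kpow I K 0 d g) (T d x)) = (\<Sum>d\<in>{g}. sc (kpow I K 0 d g) (T d x))"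
    by (rule sum.mono_neutral_right) (use I g in auto)
  thus ?case by simp
next
  case (Suc n)
  let ?g = "\<lambda>j. \<Sum>d\<in>I. sc (kpow I K j d g) (T d ((f ^^ (Suc n - j)) x))"
  have "(f ^^ Suc n) (T g x) = f ((f ^^ n) (T g x))" by simp
  also have "\<dots> = (\<Sum>j\<le>n. sc (of_nat (n choose j)) (\<Sum>d\<in>I. sc (kpow I K j d g) (f (T d ((f ^^ (n - j)) x)))))"
    unfolding Suc by (simp add: lin_sum[OF f] lin_scale[OF f])
  also have "\<dots> = (\<Sum>j\<le>n. sc (of_nat (n choose j)) (?g j)) + (\<Sum>j\<le>n. sc (of_nat (n choose j)) (?g (Suc j)))"
  proof -
    have "(\<Sum>d\<in>I. sc (kpow I K j d g) (f (T d ((f ^^ (n - j)) x)))) = ?g j + ?g (Suc j)" if "j \<le> n" for j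
    proof -
      have e: "f ((f ^^ (n - j)) x) = (f ^^ (Suc n - j)) x" using that by (simp add: Suc_diff_le)
      have "(\<Sum>d\<in>I. sc (kpow I K j d g) (f (T d ((f ^^ (n - j)) x))))
          = (\<Sum>d\<in>I. sc (kpow I K j d g) (T d ((f ^^ (Suc n - j)) x))) + (\<Sum>d\<in>I. sc (kpow I K j d g) (\<Sum>e\<in>I. sc (K e d) (T e ((f ^^ (n - j)) x))))"
        by (simp add: rel e scale_right_distrib sum.distrib)
      also have "(\<Sum>d\<in>I. sc (kpow I K j d g) (\<Sum>e\<in>I. sc (K e d) (T e ((f ^^ (n - j)) x)))) = ?g (Suc j)"
        unfolding kpow_Suc_sum[OF I] by simp
      finally show ?thesis by simp
    qed
    hence "(\<Sum>j\<le>n. sc (of_nat (n choose j)) (\<Sum>d\<in>I. sc (kpow I K j d g) (f (T d ((f ^^ (n - j)) x)))))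
        = (\<Sum>j\<le>n. sc (of_nat (n choose j)) (?g j + ?g (Suc j)))" by (intro sum.cong) auto
    thus ?thesis by (simp add: scale_right_distrib sum.distrib)
  qed
  also have "\<dots> = (\<Sum>j\<le>Suc n. sc (of_nat (Suc n choose j)) (?g j))"
    by (rule sum_choose_Suc_scale[symmetric])
  finally show ?case .
qed

lemma representation_image_exp_coords:
  assumes f: "lin sc f" and inv: "inv_basis f B" and v: "v \<in> span B"
    and S: "lin sc S" and B2: "independent B2" and SB: "\<And>b. b \<in> B \<Longrightarrow> S b \<in> span B2"
  shows "representation B2 (S ((f ^^ i) v)) b' / of_nat (fact i)
       = (\<Sum>b\<in>B. (representation B ((f ^^ i) v) b / of_nat (fact i)) * representation B2 (S b) b')"
proof -
  have B: "finite B" "independent B" using inv unfolding inv_basis_def by auto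
  have "representation B2 (S ((f ^^ i) v)) b' = (\<Sum>b\<in>B. representation B ((f ^^ i) v) b * representation B2 (S b) b')"
    by (rule representation_lin_image[OF S B inv_basis_funpow_span[OF f inv v] B2 SB])
  thus ?thesis by (simp add: sum_divide_distrib)
qed

lemma summable_image_exp_coords:
  assumes f: "lin sc f" and inv: "inv_basis f B" and v: "v \<in> span B"
    and S: "lin sc S" and B2: "independent B2" and SB: "\<And>b. b \<in> B \<Longrightarrow> S b \<in> span B2"
  shows "summable (\<lambda>i. norm (representation B2 (S ((f ^^ i) v)) b' / of_nat (fact i)))"
proof (rule summable_comparison_test'[where g="\<lambda>i. \<Sum>b\<in>B. norm (representation B ((f ^^ i) v) b / of_nat (fact i)) * norm (representation B2 (S b) b')"])
  show "summable (\<lambda>i. \<Sum>b\<in>B. norm (representation B ((f ^^ i) v) b / of_nat (fact i)) * norm (representation B2 (S b) b'))"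
    by (intro summable_sum summable_mult2 summable_exp_coords[OF f inv v])
  fix i
  have "norm (representation B2 (S ((f ^^ i) v)) b' / of_nat (fact i))
      \<le> (\<Sum>b\<in>B. norm (representation B ((f ^^ i) v) b / of_nat (fact i) * representation B2 (S b) b'))"
    by (subst representation_image_exp_coords[OF f inv v S B2 SB]) (simp_all add: norm_sum)
  thus "norm (norm (representation B2 (S ((f ^^ i) v)) b' / of_nat (fact i)))
      \<le> (\<Sum>b\<in>B. norm (representation B ((f ^^ i) v) b / of_nat (fact i)) * norm (representation B2 (S b) b'))"
    by (simp add: norm_mult norm_divide)
qed

lemma representation_image_coord_suminf:
  assumes f: "lin sc f" and inv: "inv_basis f B" and v: "v \<in> span B"
    and S: "lin sc S" and B2: "independent B2" and SB: "\<And>b. b \<in> B \<Longrightarrow> S b \<in> span B2"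
  shows "representation B2 (S (coord_suminf B (exp_term f v))) b'
       = (\<Sum>i. representation B2 (S ((f ^^ i) v)) b' / of_nat (fact i))"
proof -
  have sc: "summable (\<lambda>i. representation B ((f ^^ i) v) b / of_nat (fact i))" for b
    by (rule summable_norm_cancel[OF summable_exp_coords[OF f inv v]])
  have "representation B2 (S (coord_suminf B (exp_term f v))) b'
      = (\<Sum>b\<in>B. suminf (\<lambda>k. representation B (exp_term f v k) b) * representation B2 (S b) b')"
    unfolding lin_coord_suminf[OF S] by (rule representation_sum_scale[OF B2 SB])
  also have "\<dots> = (\<Sum>b\<in>B. \<Sum>i. (representation B ((f ^^ i) v) b / of_nat (fact i)) * representation B2 (S b) b')"
    unfolding representation_exp_term[OF f inv v] by (intro sum.cong refl suminf_mult2 sc)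
  also have "\<dots> = (\<Sum>i. \<Sum>b\<in>B. (representation B ((f ^^ i) v) b / of_nat (fact i)) * representation B2 (S b) b')"
    by (rule suminf_sum[symmetric]) (intro summable_mult2 sc)
  finally show ?thesis by (simp only: representation_image_exp_coords[OF f inv v S B2 SB])
qed

lemma funpow_intertwine_coeff:
  assumes I: "finite I" and f: "lin sc f" and T: "\<And>d. d \<in> I \<Longrightarrow> lin sc (T d)"
    and rel: "\<And>d x. d \<in> I \<Longrightarrow> f (T d x) = T d (f x) + (\<Sum>e\<in>I. sc (K e d) (T e x))"
    and g: "g \<in> I" and B2: "independent B2" and TB2: "\<And>d i. d \<in> I \<Longrightarrow> T d ((f ^^ i) v) \<in> span B2"
  shows "representation B2 ((f ^^ n) (T g v)) b' / of_nat (fact n)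
       = (\<Sum>d\<in>I. \<Sum>j\<le>n. (kpow I K j d g / of_nat (fact j))
            * (representation B2 (T d ((f ^^ (n - j)) v)) b' / of_nat (fact (n - j))))"
proof -
  have in2: "(\<Sum>d\<in>I. sc (kpow I K j d g) (T d ((f ^^ (n - j)) v))) \<in> span B2" for j
    by (intro span_sum span_scale TB2)
  have PI: "(f ^^ n) (T g v) = (\<Sum>j\<le>n. sc (of_nat (n choose j)) (\<Sum>d\<in>I. sc (kpow I K j d g) (T d ((f ^^ (n - j)) v))))"
    by (rule funpow_intertwine[OF I f T rel g])
  have "representation B2 ((f ^^ n) (T g v)) b' / of_nat (fact n)
      = (\<Sum>j\<le>n. of_nat (n choose j) * (\<Sum>d\<in>I. kpow I K j d g * representation B2 (T d ((f ^^ (n - j)) v)) b')) / of_nat (fact n)"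
    unfolding PI representation_sum_scale[OF B2 in2]
    by (intro arg_cong2[where f="(/)"] sum.cong refl arg_cong2[where f="(*)"] representation_sum_scale[OF B2] TB2)
  also have "\<dots> = (\<Sum>j\<le>n. \<Sum>d\<in>I. (kpow I K j d g / of_nat (fact j))
            * (representation B2 (T d ((f ^^ (n - j)) v)) b' / of_nat (fact (n - j))))"
    unfolding sum_divide_distrib
  proof (rule sum.cong[OF refl])
    fix j assume "j \<in> {..n}"
    hence "of_nat (n choose j) / of_nat (fact n) = (1 / (fact j * fact (n - j)) :: complex)"
      using inverse_fact_mult_binomial[of j n] by simp
    thus "of_nat (n choose j) * (\<Sum>d\<in>I. kpow I K j d g * representation B2 (T d ((f ^^ (n - j)) v)) b') / of_nat (fact n)
        = (\<Sum>d\<in>I. (kpow I K j d g / of_nat (fact j)) * (representation B2 (T d ((f ^^ (n - j)) v)) b' / of_nat (fact (n - j))))"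
      unfolding sum_distrib_left sum_divide_distrib by (intro sum.cong refl) (simp add: field_simps)
  qed
  also have "\<dots> = (\<Sum>d\<in>I. \<Sum>j\<le>n. (kpow I K j d g / of_nat (fact j))
            * (representation B2 (T d ((f ^^ (n - j)) v)) b' / of_nat (fact (n - j))))"
    by (rule sum.swap)
  finally show ?thesis .
qed

lemma expop_intertwine:
  assumes I: "finite I" and f: "lin sc f" and T: "\<And>d. d \<in> I \<Longrightarrow> lin sc (T d)"
    and rel: "\<And>d x. d \<in> I \<Longrightarrow> f (T d x) = T d (f x) + (\<Sum>e\<in>I. sc (K e d) (T e x))"
    and g: "g \<in> I" and inv: "inv_basis f B" and v: "v \<in> span B" and inv2: "inv_basis f B2"
    and TB: "\<And>d b. d \<in> I \<Longrightarrow> b \<in> B \<Longrightarrow> T d b \<in> span B2"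
  shows "expop sc f (T g v) = (\<Sum>d\<in>I. sc (suminf (\<lambda>j. kpow I K j d g / of_nat (fact j))) (T d (expop sc f v)))"
proof -
  have B: "finite B" "independent B" using inv unfolding inv_basis_def by auto
  have B2: "finite B2" "independent B2" using inv2 unfolding inv_basis_def by auto
  have TBs: "T d y \<in> span B2" if "d \<in> I" "y \<in> span B" for d y
    using lin_span_image[OF T[OF that(1)] TB[OF that(1)] that(2)] .
  have Tv: "T g v \<in> span B2" by (rule TBs[OF g v])
  define w where "w = coord_suminf B (exp_term f v)"
  have w: "w \<in> span B" unfolding w_def by (rule coord_suminf_span[OF B(1)])
  have E1: "expop sc f v = w" unfolding w_def by (rule expop_eq_coord_suminf[OF f inv v])
  have E2: "expop sc f (T g v) = coord_suminf B2 (exp_term f (T g v))" by (rule expop_eq_coord_suminf[OF f inv2 Tv])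
  show ?thesis
    unfolding E1 E2
  proof (rule representation_eqI[OF B2 coord_suminf_span[OF B2(1)]])
    show "(\<Sum>d\<in>I. sc (suminf (\<lambda>j. kpow I K j d g / of_nat (fact j))) (T d w)) \<in> span B2"
      by (intro span_sum span_scale TBs w)
    fix b' assume b': "b' \<in> B2"
    define a where "a d j = kpow I K j d g / of_nat (fact j)" for d j
    define t where "t d i = representation B2 (T d ((f ^^ i) v)) b' / of_nat (fact i)" for d i
    have "representation B2 (coord_suminf B2 (exp_term f (T g v))) b'
        = (\<Sum>n. representation B2 ((f ^^ n) (T g v)) b' / of_nat (fact n))"
      unfolding representation_coord_suminf[OF B2 b'] representation_exp_term[OF f inv2 Tv] ..
    also have "\<dots> = (\<Sum>n. \<Sum>d\<in>I. \<Sum>j\<le>n. a d j * t d (n - j))"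
      unfolding a_def t_def
      by (subst funpow_intertwine_coeff[OF I f T rel g B2(2)]) (auto intro: TBs inv_basis_funpow_span[OF f inv v])
    also have "\<dots> = (\<Sum>d\<in>I. suminf (a d) * suminf (t d))"
    proof (rule sum_suminf_mult_Cauchy[symmetric])
      fix d assume d: "d \<in> I"
      show "summable (\<lambda>j. norm (a d j))" unfolding a_def by (rule summable_kpow[OF I d])
      show "summable (\<lambda>i. norm (t d i))"
        unfolding t_def by (rule summable_image_exp_coords[OF f inv v T[OF d] B2(2) TB[OF d]])
    qed
    also have "\<dots> = (\<Sum>d\<in>I. suminf (a d) * representation B2 (T d w) b')"
      using representation_image_coord_suminf[OF f inv v T B2(2) TB]
      unfolding w_def t_def by (intro sum.cong refl) simp
    also have "\<dots> = representation B2 (\<Sum>d\<in>I. sc (suminf (a d)) (T d w)) b'"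
      by (rule representation_sum_scale[symmetric, OF B2(2) TBs[OF _ w]])
    finally show "representation B2 (coord_suminf B2 (exp_term f (T g v))) b' =
        representation B2 (\<Sum>d\<in>I. sc (suminf (\<lambda>j. kpow I K j d g / of_nat (fact j))) (T d w)) b'"
      unfolding a_def .
  qed
qed

end

section \<open>Linear independence of spherical harmonics\<close>

lemma real_poly_coeffs_zero:
  fixes q :: "nat \<Rightarrow> complex"
  assumes E: "finite E" and z: "\<And>t::real. (\<Sum>e\<in>E. q e * (complex_of_real t) ^ e) = 0" and e: "e \<in> E"
  shows "q e = 0"
proof -
  define p where "p = (\<Sum>e\<in>E. monom (q e) e)"
  have pz: "poly p (complex_of_real t) = 0" for t
    unfolding p_def poly_sum poly_monom using z by simp
  have "p = 0"
  proof (rule ccontr)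
    assume "p \<noteq> 0"
    hence "finite {x. poly p x = 0}" by (rule poly_roots_finite)
    moreover have "range complex_of_real \<subseteq> {x. poly p x = 0}" using pz by auto
    ultimately have "finite (range complex_of_real)" by (rule finite_subset[rotated])
    moreover have "inj complex_of_real" by (simp add: inj_on_def)
    ultimately have "finite (UNIV :: real set)" using finite_imageD by blast
    thus False using infinite_UNIV_char_0[where 'a=real] by simp
  qed
  hence "coeff p e = 0" by simp
  thus ?thesis unfolding p_def coeff_sum coeff_monom using E e
    by (simp add: sum.delta)
qed

lemma monomial_sum_split_var:
  fixes x :: "nat \<Rightarrow> 'a::comm_ring_1"
  assumes S: "finite S" and V: "finite V" and a: "a \<notin> V"
  shows "(\<Sum>k\<in>S. P k * (\<Prod>i\<in>insert a V. x i ^ k i))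
       = (\<Sum>e\<in>(\<lambda>k. k a) ` S. x a ^ e *
            (\<Sum>k'\<in>(\<lambda>k. k(a := 0)) ` {k\<in>S. k a = e}. P (k'(a := e)) * (\<Prod>i\<in>V. x i ^ k' i)))"
proof -
  have inj: "inj_on (\<lambda>k. k(a := 0)) {k\<in>S. k a = e}" for e
    unfolding inj_on_def by (auto simp: fun_eq_iff) (metis fun_upd_other)
  have "(\<Sum>k\<in>S. P k * (\<Prod>i\<in>insert a V. x i ^ k i))
      = (\<Sum>e\<in>(\<lambda>k. k a) ` S. \<Sum>k\<in>{k\<in>S. k a = e}. P k * (\<Prod>i\<in>insert a V. x i ^ k i))"
    by (rule sum.image_gen[OF S])
  also have "\<dots> = (\<Sum>e\<in>(\<lambda>k. k a) ` S.
      \<Sum>k\<in>{k\<in>S. k a = e}. x a ^ e * (P ((k(a := 0))(a := e)) * (\<Prod>i\<in>V. x i ^ (k(a := 0)) i)))"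
  proof (intro sum.cong refl)
    fix e k assume "k \<in> {k\<in>S. k a = e}"
    moreover have "(\<Prod>i\<in>V. x i ^ (k(a := 0)) i) = (\<Prod>i\<in>V. x i ^ k i)"
      using a by (intro prod.cong) auto
    ultimately show "P k * (\<Prod>i\<in>insert a V. x i ^ k i) = x a ^ e * (P ((k(a := 0))(a := e)) * (\<Prod>i\<in>V. x i ^ (k(a := 0)) i))"
      using a by (simp add: prod.insert[OF V a] fun_upd_idem mult_ac)
  qed
  also have "\<dots> = (\<Sum>e\<in>(\<lambda>k. k a) ` S. x a ^ e *
      (\<Sum>k\<in>{k\<in>S. k a = e}. P ((k(a := 0))(a := e)) * (\<Prod>i\<in>V. x i ^ (k(a := 0)) i)))"
    by (simp only: sum_distrib_left)
  also have "\<dots> = (\<Sum>e\<in>(\<lambda>k. k a) ` S. x a ^ e *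
            (\<Sum>k'\<in>(\<lambda>k. k(a := 0)) ` {k\<in>S. k a = e}. P (k'(a := e)) * (\<Prod>i\<in>V. x i ^ k' i)))"
    by (intro sum.cong refl arg_cong2[where f="(*)"] sum.reindex[OF inj, symmetric, unfolded comp_def])
  finally show ?thesis .
qed

lemma monomial_sum_coeffs_zero:
  fixes P :: "(nat \<Rightarrow> nat) \<Rightarrow> complex"
  assumes V: "finite V" and S: "finite S" and supp: "\<And>k i. k \<in> S \<Longrightarrow> i \<notin> V \<Longrightarrow> k i = 0"
    and z: "\<And>u::nat \<Rightarrow> real. (\<Sum>k\<in>S. P k * (\<Prod>i\<in>V. complex_of_real (u i) ^ k i)) = 0"
    and k: "k \<in> S"
  shows "P k = 0"
  using V S supp z k
proof (induction V arbitrary: S P k rule: finite_induct)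
  case empty
  have "\<And>k'. k' \<in> S \<Longrightarrow> k' = (\<lambda>_. 0)" using empty.prems(2) by auto
  hence "S = {\<lambda>_. 0}" "k = (\<lambda>_. 0)" using empty.prems(4) by auto
  thus ?case using empty.prems(3)[of "\<lambda>_. 0"] by simp
next
  case (insert a V)
  define Se where "Se e = (\<lambda>k. k(a := 0)) ` {k\<in>S. k a = e}" for e
  define R where "R e u = (\<Sum>k'\<in>Se e. P (k'(a := e)) * (\<Prod>i\<in>V. complex_of_real (u i) ^ k' i))" for e u
  have R0: "R e u = 0" if e: "e \<in> (\<lambda>k. k a) ` S" for e u
  proof -
    have RV: "R e (u(a := t)) = R e u" for t e
      unfolding R_def using insert.hyps(2) by (intro sum.cong refl arg_cong2[where f="(*)"] prod.cong) auto
    have "(\<Sum>e\<in>(\<lambda>k. k a) ` S. R e u * complex_of_real t ^ e) = 0" for t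
    proof -
      have "0 = (\<Sum>k\<in>S. P k * (\<Prod>i\<in>insert a V. complex_of_real ((u(a := t)) i) ^ k i))"
        using insert.prems(3) by simp
      also have "\<dots> = (\<Sum>e\<in>(\<lambda>k. k a) ` S. complex_of_real ((u(a := t)) a) ^ e * R e (u(a := t)))"
        unfolding R_def Se_def by (rule monomial_sum_split_var[OF insert.prems(1) insert.hyps(1,2)])
      finally show ?thesis by (simp add: RV mult.commute)
    qed
    thus ?thesis using insert.prems(1) by (intro real_poly_coeffs_zero[OF _ _ e]) auto
  qed
  have "P ((k(a := 0))(a := k a)) = 0"
  proof (rule insert.IH[of "Se (k a)" "\<lambda>k'. P (k'(a := k a))" "k(a := 0)"])
    show "finite (Se (k a))" unfolding Se_def using insert.prems(1) by simp
    show "k' i = 0" if "k' \<in> Se (k a)" "i \<notin> V" for k' i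
      using that insert.prems(2) unfolding Se_def by (cases "i = a") auto
    show "(\<Sum>k'\<in>Se (k a). P (k'(a := k a)) * (\<Prod>i\<in>V. complex_of_real (u i) ^ k' i)) = 0" for u
      using R0[of "k a" u] insert.prems(4) unfolding R_def by simp
    show "k(a := 0) \<in> Se (k a)" unfolding Se_def using insert.prems(4) by simp
  qed
  thus ?case by simp
qed

lemma finite_MI: "finite (MI D m)"
proof -
  have "MI D m \<subseteq> (\<lambda>f i. if i \<in> {1..D} then f i else 0) ` (PiE {1..D} (\<lambda>_. {..m}))"
  proof
    fix k assume k: "k \<in> MI D m"
    hence k0: "\<And>i. i \<notin> {1..D} \<Longrightarrow> k i = 0" and ks: "(\<Sum>i=1..D. k i) = m" unfolding MI_def by auto
    have "k i \<le> m" if "i \<in> {1..D}" for i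
      using member_le_sum[of i "{1..D}" k] that ks by simp
    hence "restrict k {1..D} \<in> PiE {1..D} (\<lambda>_. {..m})" by auto
    moreover have "k = (\<lambda>i. if i \<in> {1..D} then restrict k {1..D} i else 0)" using k0 by auto
    ultimately show "k \<in> (\<lambda>f i. if i \<in> {1..D} then f i else 0) ` (PiE {1..D} (\<lambda>_. {..m}))" by blast
  qed
  thus ?thesis by (rule finite_subset) (intro finite_imageI finite_PiE; simp)
qed

lemma peval_zero_coeffs:
  assumes hp: "hom_poly D m c" and z: "\<And>u. peval D m c u = 0"
  shows "c k = 0"
proof (cases "k \<in> MI D m")
  case True
  show ?thesis
    by (rule monomial_sum_coeffs_zero[where V="{1..D}" and S="MI D m", OF _ finite_MI _ _ True])
       (use z in \<open>auto simp: MI_def peval_def\<close>)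
next
  case False thus ?thesis using hp unfolding hom_poly_def by blast
qed

text \<open>The Fischer inner product sum_k k! P_k conj(Q_k) makes multiplication by |x|^2 adjoint to
the Laplacian, so multiples of |x|^2 are orthogonal to harmonic polynomials.\<close>
definition r2_mult :: "nat \<Rightarrow> ((nat \<Rightarrow> nat) \<Rightarrow> complex) \<Rightarrow> (nat \<Rightarrow> nat) \<Rightarrow> complex" where
  "r2_mult D P k = (\<Sum>i=1..D. if 2 \<le> k i then P (k(i := k i - 2)) else 0)"

definition laplacian :: "nat \<Rightarrow> ((nat \<Rightarrow> nat) \<Rightarrow> complex) \<Rightarrow> (nat \<Rightarrow> nat) \<Rightarrow> complex" where
  "laplacian D H k = (\<Sum>i=1..D. of_nat ((k i + 2) * (k i + 1)) * H (k(i := k i + 2)))"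

definition fact_multi :: "nat \<Rightarrow> (nat \<Rightarrow> nat) \<Rightarrow> nat" where
  "fact_multi D k = (\<Prod>i=1..D. fact (k i))"

definition fischer :: "nat \<Rightarrow> nat \<Rightarrow> ((nat \<Rightarrow> nat) \<Rightarrow> complex) \<Rightarrow> ((nat \<Rightarrow> nat) \<Rightarrow> complex) \<Rightarrow> complex" where
  "fischer D n P Q = (\<Sum>k\<in>MI D n. of_nat (fact_multi D k) * P k * cnj (Q k))"

definition monomial :: "nat \<Rightarrow> (nat \<Rightarrow> nat) \<Rightarrow> (nat \<Rightarrow> real) \<Rightarrow> complex" where
  "monomial D k u = (\<Prod>i=1..D. complex_of_real (u i) ^ k i)"

lemma peval_monomial: "peval D m c u = (\<Sum>k\<in>MI D m. c k * monomial D k u)"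
  unfolding peval_def monomial_def ..

lemma harmonic_iff_laplacian: "harmonic D H \<longleftrightarrow> (\<forall>k. laplacian D H k = 0)"
  unfolding harmonic_def laplacian_def ..

lemma sum_upd_nat:
  fixes f :: "nat \<Rightarrow> nat"
  assumes "finite A" "i \<in> A"
  shows "(\<Sum>l\<in>A. (f(i := x)) l) + f i = (\<Sum>l\<in>A. f l) + x"
proof -
  have "(\<Sum>l\<in>A. (f(i := x)) l) = (f(i := x)) i + (\<Sum>l\<in>A - {i}. (f(i := x)) l)"
    by (rule sum.remove[OF assms])
  also have "(\<Sum>l\<in>A - {i}. (f(i := x)) l) = (\<Sum>l\<in>A - {i}. f l)" by (rule sum.cong) auto
  finally have "(\<Sum>l\<in>A. (f(i := x)) l) = x + (\<Sum>l\<in>A - {i}. f l)" by simp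
  moreover have "(\<Sum>l\<in>A. f l) = f i + (\<Sum>l\<in>A - {i}. f l)" using sum.remove[OF assms] by simp
  ultimately show ?thesis by simp
qed

lemma MI_up:
  assumes "j \<in> MI D m" "i \<in> {1..D}"
  shows "j(i := j i + 2) \<in> MI D (m + 2)"
  using assms sum_upd_nat[of "{1..D}" i j "j i + 2"] unfolding MI_def by auto

lemma MI_down:
  assumes "k \<in> MI D (m + 2)" "i \<in> {1..D}" "2 \<le> k i"
  shows "k(i := k i - 2) \<in> MI D m"
  using assms sum_upd_nat[of "{1..D}" i k "k i - 2"] unfolding MI_def by auto

lemma MI_reindex:
  assumes i: "i \<in> {1..D}"
  shows "(\<Sum>k\<in>MI D (m + 2). if 2 \<le> k i then G (k(i := k i - 2)) k else 0) = (\<Sum>j\<in>MI D m. G j (j(i := j i + 2)))"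
proof -
  have "(\<Sum>k\<in>MI D (m + 2). if 2 \<le> k i then G (k(i := k i - 2)) k else 0) = (\<Sum>k\<in>{k\<in>MI D (m + 2). 2 \<le> k i}. G (k(i := k i - 2)) k)"
    by (simp add: sum.inter_filter finite_MI)
  also have "\<dots> = (\<Sum>j\<in>MI D m. G j (j(i := j i + 2)))"
    by (rule sum.reindex_bij_witness[where j="\<lambda>k. k(i := k i - 2)" and i="\<lambda>j. j(i := j i + 2)"])
       (auto simp: MI_up[OF _ i] MI_down[OF _ i] MI_up[OF _ i, simplified] fun_upd_idem)
  finally show ?thesis .
qed

lemma hom_poly_r2_mult:
  assumes "hom_poly D m P"
  shows "hom_poly D (m + 2) (r2_mult D P)"
  unfolding hom_poly_def r2_mult_def
proof (intro allI impI)
  fix k assume k: "k \<notin> MI D (m + 2)"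
  have "(if 2 \<le> k i then P (k(i := k i - 2)) else 0) = 0" if i: "i \<in> {1..D}" for i
  proof (cases "2 \<le> k i")
    case True
    have "k(i := k i - 2) \<notin> MI D m"
    proof
      assume "k(i := k i - 2) \<in> MI D m"
      from MI_up[OF this i] True have "k \<in> MI D (m + 2)" by (simp add: fun_upd_idem)
      thus False using k by simp
    qed
    thus ?thesis using assms True unfolding hom_poly_def by simp
  qed simp
  thus "(\<Sum>i = 1..D. if 2 \<le> k i then P (k(i := k i - 2)) else 0) = 0" by simp
qed

lemma monomial_up:
  assumes i: "i \<in> {1..D}"
  shows "monomial D (j(i := j i + 2)) u = complex_of_real (u i) ^ 2 * monomial D j u"
proof -
  have "monomial D (j(i := j i + 2)) u = complex_of_real (u i) ^ (j(i := j i + 2)) i * (\<Prod>l\<in>{1..D} - {i}. complex_of_real (u l) ^ (j(i := j i + 2)) l)"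
    unfolding monomial_def by (rule prod.remove[OF finite_atLeastAtMost i])
  also have "(\<Prod>l\<in>{1..D} - {i}. complex_of_real (u l) ^ (j(i := j i + 2)) l) = (\<Prod>l\<in>{1..D} - {i}. complex_of_real (u l) ^ j l)"
    by (rule prod.cong) auto
  finally have "monomial D (j(i := j i + 2)) u = complex_of_real (u i) ^ (j i + 2) * (\<Prod>l\<in>{1..D} - {i}. complex_of_real (u l) ^ j l)"
    by (simp only: fun_upd_same)
  moreover have "monomial D j u = complex_of_real (u i) ^ j i * (\<Prod>l\<in>{1..D} - {i}. complex_of_real (u l) ^ j l)"
    unfolding monomial_def using prod.remove[OF finite_atLeastAtMost i] by simp
  ultimately show ?thesis by (simp add: power_add mult_ac power2_eq_square)
qed

lemma peval_r2_mult:
  assumes "hom_poly D m P"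
  shows "peval D (m + 2) (r2_mult D P) u = (\<Sum>i=1..D. complex_of_real (u i) ^ 2) * peval D m P u"
proof -
  have "peval D (m + 2) (r2_mult D P) u = (\<Sum>k\<in>MI D (m + 2). \<Sum>i=1..D. if 2 \<le> k i then P (k(i := k i - 2)) * monomial D k u else 0)"
    unfolding peval_monomial r2_mult_def sum_distrib_right by (intro sum.cong refl) auto
  also have "\<dots> = (\<Sum>i=1..D. \<Sum>k\<in>MI D (m + 2). if 2 \<le> k i then P (k(i := k i - 2)) * monomial D k u else 0)"
    by (rule sum.swap)
  also have "\<dots> = (\<Sum>i=1..D. \<Sum>j\<in>MI D m. P j * monomial D (j(i := j i + 2)) u)"
    by (intro sum.cong refl MI_reindex[where G="\<lambda>j k. P j * monomial D k u"]) 
  also have "\<dots> = (\<Sum>i=1..D. complex_of_real (u i) ^ 2 * peval D m P u)"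
    unfolding peval_monomial sum_distrib_left by (intro sum.cong refl) (simp add: monomial_up monomial_up[simplified] mult_ac)
  finally show ?thesis by (simp add: sum_distrib_right)
qed

lemma fact_multi_up:
  assumes i: "i \<in> {1..D}"
  shows "fact_multi D (j(i := j i + 2)) = fact_multi D j * ((j i + 2) * (j i + 1))"
proof -
  define R where "R = (\<Prod>l\<in>{1..D} - {i}. (fact (j l) :: nat))"
  have "fact_multi D (j(i := j i + 2)) = fact ((j(i := j i + 2)) i) * (\<Prod>l\<in>{1..D} - {i}. fact ((j(i := j i + 2)) l))"
    unfolding fact_multi_def by (rule prod.remove[OF finite_atLeastAtMost i])
  also have "(\<Prod>l\<in>{1..D} - {i}. fact ((j(i := j i + 2)) l)) = R"
    unfolding R_def by (rule prod.cong) auto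
  finally have A: "fact_multi D (j(i := j i + 2)) = fact (j i + 2) * R"
    by (simp only: fun_upd_same)
  have B: "fact_multi D j = fact (j i) * R"
    unfolding fact_multi_def R_def by (rule prod.remove[OF finite_atLeastAtMost i])
  have C: "fact (j i + 2) = (j i + 2) * (j i + 1) * (fact (j i) :: nat)"
    by (simp add: numeral_2_eq_2 fact_Suc) (simp add: algebra_simps)
  show ?thesis unfolding A B C by (simp only: mult_ac)
qed

lemma fischer_r2_mult:
  assumes "hom_poly D m P"
  shows "fischer D (m + 2) (r2_mult D P) H = fischer D m P (laplacian D H)"
proof -
  have "fischer D (m + 2) (r2_mult D P) H = (\<Sum>k\<in>MI D (m + 2). \<Sum>i=1..D. if 2 \<le> k i then of_nat (fact_multi D k) * P (k(i := k i - 2)) * cnj (H k) else 0)"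
    unfolding fischer_def r2_mult_def sum_distrib_left sum_distrib_right by (intro sum.cong refl) auto
  also have "\<dots> = (\<Sum>i=1..D. \<Sum>k\<in>MI D (m + 2). if 2 \<le> k i then of_nat (fact_multi D k) * P (k(i := k i - 2)) * cnj (H k) else 0)"
    by (rule sum.swap)
  also have "\<dots> = (\<Sum>i=1..D. \<Sum>j\<in>MI D m. of_nat (fact_multi D (j(i := j i + 2))) * P j * cnj (H (j(i := j i + 2))))"
    by (intro sum.cong refl MI_reindex[where G="\<lambda>j k. of_nat (fact_multi D k) * P j * cnj (H k)"])
  also have "\<dots> = (\<Sum>j\<in>MI D m. \<Sum>i=1..D. of_nat (fact_multi D j) * P j * cnj (of_nat ((j i + 2) * (j i + 1)) * H (j(i := j i + 2))))"
    by (subst sum.swap) (intro sum.cong refl, simp add: fact_multi_up fact_multi_up[simplified] algebra_simps)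
  also have "\<dots> = fischer D m P (laplacian D H)"
    unfolding fischer_def laplacian_def cnj_sum sum_distrib_left ..
  finally show ?thesis .
qed

lemma fischer_self_zero:
  assumes "fischer D m P P = 0" "k \<in> MI D m"
  shows "P k = 0"
proof -
  have eq: "of_nat (fact_multi D k) * P k * cnj (P k) = complex_of_real (of_nat (fact_multi D k) * (norm (P k))^2)" for k
  proof -
    have "P k * cnj (P k) = complex_of_real ((norm (P k))^2)" by (rule complex_norm_square[symmetric])
    thus ?thesis unfolding mult.assoc of_real_mult by simp
  qed
  have "fischer D m P P = (\<Sum>k\<in>MI D m. complex_of_real (of_nat (fact_multi D k) * (norm (P k))^2))"
    unfolding fischer_def by (rule sum.cong[OF refl]) (rule eq)
  also have "\<dots> = complex_of_real (\<Sum>k\<in>MI D m. of_nat (fact_multi D k) * (norm (P k))^2)"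
    by (rule of_real_sum[symmetric])
  finally have X: "fischer D m P P = complex_of_real (\<Sum>k\<in>MI D m. of_nat (fact_multi D k) * (norm (P k))^2)" .
  have "complex_of_real (\<Sum>k\<in>MI D m. of_nat (fact_multi D k) * (norm (P k))^2) = 0"
    unfolding X[symmetric] by (rule assms(1))
  hence "(\<Sum>k\<in>MI D m. of_nat (fact_multi D k) * (norm (P k))^2) = 0" by (simp only: of_real_eq_0_iff)
  hence "of_nat (fact_multi D k) * (norm (P k))^2 = (0::real)"
    using sum_nonneg_eq_0_iff[OF finite_MI] assms(2) by (metis (no_types, lifting) of_nat_0_le_iff zero_le_mult_iff zero_le_power2)
  moreover have "fact_multi D k \<noteq> 0" unfolding fact_multi_def by simp
  ultimately show ?thesis by simp
qed

lemma peval_scale: "peval D m c (\<lambda>i. t * u i) = complex_of_real t ^ m * peval D m c u"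
proof -
  have "monomial D k (\<lambda>i. t * u i) = complex_of_real t ^ m * monomial D k u" if "k \<in> MI D m" for k
  proof -
    have "monomial D k (\<lambda>i. t * u i) = (\<Prod>i=1..D. complex_of_real t ^ k i) * monomial D k u"
      unfolding monomial_def by (simp add: power_mult_distrib prod.distrib)
    also have "(\<Prod>i=1..D. complex_of_real t ^ k i) = complex_of_real t ^ (\<Sum>i=1..D. k i)"
      by (simp add: power_sum)
    finally show ?thesis using that unfolding MI_def by simp
  qed
  thus ?thesis unfolding peval_monomial sum_distrib_left by (intro sum.cong refl) (simp add: mult_ac)
qed

lemma peval_cong: "(\<And>i. i \<in> {1..D} \<Longrightarrow> u i = v i) \<Longrightarrow> peval D m c u = peval D m c v"
  unfolding peval_def by (intro sum.cong refl arg_cong2[where f="(*)"] prod.cong) auto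

lemma peval_sum: "finite A \<Longrightarrow> peval D n (\<lambda>k. \<Sum>m\<in>A. f m k) u = (\<Sum>m\<in>A. peval D n (f m) u)"
  unfolding peval_def sum_distrib_right by (rule sum.swap)

lemma peval_if: "peval D n (\<lambda>k. if b then f k else 0) u = (if b then peval D n f u else 0)"
  unfolding peval_def by simp

lemma peval_mult: "peval D m (\<lambda>k. r * f k) u = r * peval D m f u"
  unfolding peval_def by (simp add: sum_distrib_left mult_ac)

lemma fischer_sum: "finite A \<Longrightarrow> fischer D n (\<lambda>k. \<Sum>m\<in>A. f m k) Q = (\<Sum>m\<in>A. fischer D n (f m) Q)"
  unfolding fischer_def sum_distrib_left sum_distrib_right by (rule sum.swap)

lemma fischer_if: "fischer D n (\<lambda>k. if b then f k else 0) Q = (if b then fischer D n f Q else 0)"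
  unfolding fischer_def by simp

definition r2_mult_pow :: "nat \<Rightarrow> nat \<Rightarrow> ((nat \<Rightarrow> nat) \<Rightarrow> complex) \<Rightarrow> (nat \<Rightarrow> nat) \<Rightarrow> complex" where
  "r2_mult_pow D j P = (r2_mult D ^^ j) P"

lemma r2_mult_pow_Suc: "r2_mult_pow D (Suc j) P = r2_mult D (r2_mult_pow D j P)" unfolding r2_mult_pow_def by simp

lemma hom_poly_r2_mult_pow: "hom_poly D m P \<Longrightarrow> hom_poly D (m + 2 * j) (r2_mult_pow D j P)"
proof (induction j)
  case 0 thus ?case by (simp add: r2_mult_pow_def)
next
  case (Suc j)
  have "hom_poly D (m + 2 * j + 2) (r2_mult D (r2_mult_pow D j P))" by (rule hom_poly_r2_mult[OF Suc.IH[OF Suc.prems]])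
  thus ?case by (simp add: r2_mult_pow_Suc add.assoc)
qed

lemma peval_r2_mult_pow: "hom_poly D m P \<Longrightarrow>
   peval D (m + 2 * j) (r2_mult_pow D j P) u = (\<Sum>i=1..D. complex_of_real (u i) ^ 2) ^ j * peval D m P u"
proof (induction j)
  case 0 thus ?case by (simp add: r2_mult_pow_def)
next
  case (Suc j)
  have "peval D (m + 2 * j + 2) (r2_mult D (r2_mult_pow D j P)) u = (\<Sum>i=1..D. complex_of_real (u i) ^ 2) * peval D (m + 2 * j) (r2_mult_pow D j P) u"
    by (rule peval_r2_mult[OF hom_poly_r2_mult_pow[OF Suc.prems]])
  thus ?case using Suc by (simp add: r2_mult_pow_Suc add.assoc mult_ac)
qed

lemma fischer_r2_mult_pow_harmonic:
  assumes P: "hom_poly D m P" and H: "harmonic D H" and j: "0 < j"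
  shows "fischer D (m + 2 * j) (r2_mult_pow D j P) H = 0"
proof -
  obtain i where i: "j = Suc i" using j not0_implies_Suc by blast
  have "fischer D (m + 2 * j) (r2_mult_pow D j P) H = fischer D ((m + 2 * i) + 2) (r2_mult D (r2_mult_pow D i P)) H"
    by (simp add: i r2_mult_pow_Suc)
  also have "\<dots> = fischer D (m + 2 * i) (r2_mult_pow D i P) (laplacian D H)"
    by (rule fischer_r2_mult[OF hom_poly_r2_mult_pow[OF P]])
  also have "\<dots> = 0" using H unfolding harmonic_iff_laplacian fischer_def by simp
  finally show ?thesis .
qed

lemma sum_squares_normalize:
  fixes x :: "nat \<Rightarrow> real"
  assumes "0 < (\<Sum>i\<in>A. (x i)^2)"
  shows "(\<Sum>i\<in>A. (x i / sqrt (\<Sum>j\<in>A. (x j)^2))^2) = 1"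
  using assms by (simp add: power_divide sum_divide_distrib[symmetric])

lemma sum_squares_unit_vector:
  assumes "finite A" "j \<in> A"
  shows "(\<Sum>i\<in>A. (if i = j then 1 else 0 :: real)^2) = 1"
  using assms by (simp add: if_distrib[of "\<lambda>x. x^2"] cong: if_cong)

lemma hom_poly_zero_on_sphere:
  assumes D: "1 \<le> D" and F: "hom_poly D M F"
    and z: "\<And>u. (\<Sum>i=1..D. (u i)^2) = 1 \<Longrightarrow> peval D M F u = 0"
  shows "F k = 0"
proof (rule peval_zero_coeffs[OF F])
  have pos: "peval D M F x = 0" if "0 < (\<Sum>i=1..D. (x i)^2)" for x
  proof -
    define s where "s = sqrt (\<Sum>i=1..D. (x i)^2)"
    have "x = (\<lambda>i. s * (x i / s))" using that by (auto simp: s_def)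
    thus ?thesis using z[OF sum_squares_normalize[OF that, folded s_def]] by (metis mult_zero_right peval_scale)
  qed
  fix x
  show "peval D M F x = 0"
  proof (cases "0 < (\<Sum>i=1..D. (x i)^2)")
    case False
    hence "(\<Sum>i=1..D. (x i)^2) = 0" by (metis sum_nonneg zero_le_power2 less_eq_real_def)
    hence "x i = 0" if "i \<in> {1..D}" for i
      using that sum_nonneg_eq_0_iff[of "{1..D}" "\<lambda>i. (x i)^2"] by simp
    define e :: "nat \<Rightarrow> real" where "e i = (if i = 1 then 1 else 0)" for i
    have e1: "(\<Sum>i=1..D. (e i)^2) = 1" unfolding e_def using D by (intro sum_squares_unit_vector) auto
    have "peval D M F x = peval D M F (\<lambda>i. 0 * e i)" by (intro peval_cong) (simp add: \<open>\<And>i. _ \<Longrightarrow> x i = 0\<close>)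
    also have "\<dots> = 0 ^ M * peval D M F e" by (simp only: peval_scale of_real_0)
    also have "peval D M F e = 0" by (rule pos) (use e1 in simp)
    finally show ?thesis by simp
  qed (rule pos)
qed

text \<open>Replacing u by -u shows that the terms of degree of the same parity as M alone
vanish on the sphere.\<close>
lemma same_parity_part_zero_on_sphere:
  assumes z: "\<And>u. (\<Sum>i=1..D. (u i)^2) = 1 \<Longrightarrow> (\<Sum>m\<le>M. peval D m (c m) u) = 0"
    and u: "(\<Sum>i=1..D. (u i)^2) = 1"
  shows "(\<Sum>m\<le>M. if even (M + m) then peval D m (c m) u else 0) = 0"
proof -
  have "(\<Sum>m\<le>M. peval D m (c m) (\<lambda>i. (-1) * u i)) = 0" using z[of "\<lambda>i. - u i"] u by simp
  hence neg: "(\<Sum>m\<le>M. (-1)^m * peval D m (c m) u) = 0" unfolding peval_scale by simp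
  have "2 * (\<Sum>m\<le>M. if even (M + m) then peval D m (c m) u else 0)
      = (\<Sum>m\<le>M. peval D m (c m) u) + (-1)^M * (\<Sum>m\<le>M. (-1)^m * peval D m (c m) u)"
    unfolding sum_distrib_left sum.distrib[symmetric]
    by (intro sum.cong refl) (auto simp: power_add[symmetric] algebra_simps)
  thus ?thesis using z[OF u] neg by simp
qed

text \<open>Homogenisation to degree M of the terms whose degree has the parity of M; on the sphere,
where |x|^2 = 1, it agrees with them.\<close>
definition homogenize :: "nat \<Rightarrow> nat \<Rightarrow> (nat \<Rightarrow> (nat \<Rightarrow> nat) \<Rightarrow> complex) \<Rightarrow> (nat \<Rightarrow> nat) \<Rightarrow> complex" where
  "homogenize D M c k = (\<Sum>m\<le>M. if even (M + m) then r2_mult_pow D ((M - m) div 2) (c m) k else 0)"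

lemma same_parity_add_twice_half: "m \<le> M \<Longrightarrow> even (M + m) \<Longrightarrow> m + 2 * ((M - m) div 2) = (M::nat)"
  by (simp add: even_two_times_div_two even_diff_nat)

lemma hom_poly_homogenize:
  assumes "\<And>m. m \<le> M \<Longrightarrow> hom_poly D m (c m)"
  shows "hom_poly D M (homogenize D M c)"
  unfolding hom_poly_def homogenize_def
proof (intro allI impI)
  fix k assume k: "k \<notin> MI D M"
  have "(if even (M + m) then r2_mult_pow D ((M - m) div 2) (c m) k else 0) = 0" if "m \<in> {..M}" for m
  proof (cases "even (M + m)")
    case True
    have "hom_poly D (m + 2 * ((M - m) div 2)) (r2_mult_pow D ((M - m) div 2) (c m))"
      using hom_poly_r2_mult_pow assms that by simp
    hence "hom_poly D M (r2_mult_pow D ((M - m) div 2) (c m))"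
      using same_parity_add_twice_half[of m M] that True by simp
    thus ?thesis using True k unfolding hom_poly_def by simp
  qed simp
  thus "(\<Sum>m\<le>M. if even (M + m) then r2_mult_pow D ((M - m) div 2) (c m) k else 0) = 0" by simp
qed

lemma peval_homogenize_sphere:
  assumes hc: "\<And>m. m \<le> M \<Longrightarrow> hom_poly D m (c m)" and u: "(\<Sum>i=1..D. (u i)^2) = 1"
  shows "peval D M (homogenize D M c) u = (\<Sum>m\<le>M. if even (M + m) then peval D m (c m) u else 0)"
  unfolding homogenize_def peval_sum[OF finite_atMost] peval_if
proof (intro sum.cong refl)
  fix m assume m: "m \<in> {..M}"
  have r1: "(\<Sum>i=1..D. complex_of_real (u i) ^ 2) = 1"
    unfolding of_real_power[symmetric] of_real_sum[symmetric] u by simp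
  have "peval D (m + 2 * j) (r2_mult_pow D j (c m)) u = peval D m (c m) u" for j
    using peval_r2_mult_pow[OF hc, of m j u] m unfolding r1 by simp
  thus "(if even (M + m) then peval D M (r2_mult_pow D ((M - m) div 2) (c m)) u else 0) =
        (if even (M + m) then peval D m (c m) u else 0)"
    using m same_parity_add_twice_half[of m M] by (metis atMost_iff)
qed

text \<open>Only the top-degree term survives in the Fischer product of the homogenisation with c M,
so that product is the Fischer norm of c M.\<close>
lemma fischer_homogenize_top:
  assumes hc: "\<And>m. m \<le> M \<Longrightarrow> hom_poly D m (c m)" and H: "harmonic D (c M)"
  shows "fischer D M (homogenize D M c) (c M) = fischer D M (c M) (c M)"
proof -
  have "fischer D M (homogenize D M c) (c M)
      = (\<Sum>m\<le>M. if even (M + m) then fischer D M (r2_mult_pow D ((M - m) div 2) (c m)) (c M) else 0)"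
    unfolding homogenize_def fischer_sum[OF finite_atMost] fischer_if ..
  also have "\<dots> = (\<Sum>m\<in>{M}. if even (M + m) then fischer D M (r2_mult_pow D ((M - m) div 2) (c m)) (c M) else 0)"
  proof (rule sum.mono_neutral_right)
    show "\<forall>m\<in>{..M} - {M}. (if even (M + m) then fischer D M (r2_mult_pow D ((M - m) div 2) (c m)) (c M) else 0) = 0"
    proof
      fix m assume "m \<in> {..M} - {M}"
      hence m: "m \<le> M" "m \<noteq> M" by auto
      show "(if even (M + m) then fischer D M (r2_mult_pow D ((M - m) div 2) (c m)) (c M) else 0) = 0"
      proof (cases "even (M + m)")
        case True
        have e: "m + 2 * ((M - m) div 2) = M" using same_parity_add_twice_half m(1) True by blast
        hence "0 < (M - m) div 2" using m(2) by (cases "(M - m) div 2") auto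
        thus ?thesis using fischer_r2_mult_pow_harmonic[OF hc[OF m(1)] H, of "(M - m) div 2"] e True by simp
      qed simp
    qed
  qed auto
  also have "\<dots> = fischer D M (c M) (c M)" by (simp add: r2_mult_pow_def)
  finally show ?thesis .
qed

lemma harmonic_top_coeff_zero:
  assumes D: "1 \<le> D" and hc: "\<And>m. m \<le> M \<Longrightarrow> hom_poly D m (c m) \<and> harmonic D (c m)"
    and z: "\<And>u. (\<Sum>i=1..D. (u i)^2) = 1 \<Longrightarrow> (\<Sum>m\<le>M. peval D m (c m) u) = 0"
  shows "c M k = 0"
proof (cases "k \<in> MI D M")
  case True
  have hom: "\<And>m. m \<le> M \<Longrightarrow> hom_poly D m (c m)" using hc by blast
  have "homogenize D M c k' = 0" for k'
  proof (rule hom_poly_zero_on_sphere[OF D hom_poly_homogenize[OF hom]])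
    fix u :: "nat \<Rightarrow> real" assume u: "(\<Sum>i=1..D. (u i)^2) = 1"
    show "peval D M (homogenize D M c) u = 0"
      using peval_homogenize_sphere[OF hom u] same_parity_part_zero_on_sphere[OF z u] by simp
  qed
  moreover have "fischer D M (homogenize D M c) (c M) = fischer D M (c M) (c M)"
    by (rule fischer_homogenize_top) (use hc in auto)
  ultimately have "fischer D M (c M) (c M) = 0" by (simp add: fischer_def)
  thus ?thesis using fischer_self_zero True by blast
next
  case False thus ?thesis using hc[of M] unfolding hom_poly_def by blast
qed

lemma harmonic_coeffs_zero:
  assumes D: "1 \<le> D" and hc: "\<And>m. m \<le> M \<Longrightarrow> hom_poly D m (c m) \<and> harmonic D (c m)"
    and z: "\<And>u. (\<Sum>i=1..D. (u i)^2) = 1 \<Longrightarrow> (\<Sum>m\<le>M. peval D m (c m) u) = 0"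
    and m: "m \<le> M"
  shows "c m k = 0"
  using hc z m
proof (induction M arbitrary: m k)
  case 0
  hence "c 0 k = 0" using harmonic_top_coeff_zero[OF D, of 0 c] by blast
  thus ?case using 0 by simp
next
  case (Suc M)
  have top: "c (Suc M) k' = 0" for k' by (rule harmonic_top_coeff_zero[OF D Suc.prems(1) Suc.prems(2)])
  have "peval D (Suc M) (c (Suc M)) u = 0" for u unfolding peval_def top by simp
  hence z': "(\<Sum>m\<le>M. peval D m (c m) u) = 0" if "(\<Sum>i=1..D. (u i)^2) = 1" for u
    using Suc.prems(2)[OF that] by simp
  show ?case
  proof (cases "m = Suc M")
    case True thus ?thesis using top by simp
  next
    case False
    hence "m \<le> M" using Suc.prems(3) by simp
    thus ?thesis using Suc.IH[of m k] Suc.prems(1) z' by simp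
  qed
qed

text \<open>Spherical coordinates u = (cos \<theta>, sin \<theta> u') with u' a unit vector in the last D - 1
coordinates, as in the definition of g_u.\<close>
definition polar :: "real \<Rightarrow> (nat \<Rightarrow> real) \<Rightarrow> nat \<Rightarrow> real" where
  "polar \<theta> u' i = (if i = 1 then cos \<theta> else sin \<theta> * u' i)"

lemma unit_sphere_polar:
  fixes u :: "nat \<Rightarrow> real"
  assumes D: "2 \<le> D" and u: "(\<Sum>i=1..D. (u i)^2) = 1"
  obtains \<theta> u' where "(\<Sum>a=2..D. (u' a)^2) = 1" "\<And>i. i \<in> {1..D} \<Longrightarrow> u i = polar \<theta> u' i"
proof -
  define r where "r = sqrt (\<Sum>i=2..D. (u i)^2)"
  have "(\<Sum>i=1..D. (u i)^2) = (u 1)^2 + (\<Sum>i=2..D. (u i)^2)"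
    using sum.atLeast_Suc_atMost[of 1 D "\<lambda>i. (u i)^2"] D by (simp add: numeral_2_eq_2)
  hence rest: "(\<Sum>i=2..D. (u i)^2) = 1 - (u 1)^2" and "(u 1)^2 \<le> 1"
    using u sum_nonneg[of "{2..D}" "\<lambda>i. (u i)^2"] by auto
  hence "\<bar>u 1\<bar> \<le> 1" by (simp add: abs_square_le_1)
  define \<theta> where "\<theta> = arccos (u 1)"
  have cos: "cos \<theta> = u 1" and sin: "sin \<theta> = r"
    using \<open>\<bar>u 1\<bar> \<le> 1\<close> unfolding \<theta>_def r_def rest by (simp_all add: cos_arccos sin_arccos)
  show ?thesis
  proof (cases "r = 0")
    case True
    hence "(\<Sum>i=2..D. (u i)^2) = 0" unfolding r_def by simp
    hence "u i = 0" if "i \<in> {2..D}" for i using that sum_nonneg_eq_0_iff[of "{2..D}" "\<lambda>i. (u i)^2"] by simp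
    moreover have "(\<Sum>a=2..D. (if a = 2 then 1 else 0 :: real)^2) = 1"
      using D by (intro sum_squares_unit_vector) auto
    ultimately show ?thesis using cos sin True by (intro that[of "\<lambda>i. if i = 2 then 1 else 0" \<theta>]) (auto simp: polar_def)
  next
    case False
    hence "0 < (\<Sum>i=2..D. (u i)^2)" unfolding r_def using sum_nonneg[of "{2..D}" "\<lambda>i. (u i)^2"] by fastforce
    hence "(\<Sum>a=2..D. (u a / r)^2) = 1" unfolding r_def by (rule sum_squares_normalize)
    thus ?thesis using cos sin False by (intro that[of "\<lambda>i. u i / r" \<theta>]) (auto simp: polar_def)
  qed
qed

lemma harm_basis_combination:
  assumes "harm_basis D m S h"
  shows "hom_poly D m (\<lambda>k. \<Sum>\<sigma>\<in>S. r \<sigma> * h \<sigma> k)" "harmonic D (\<lambda>k. \<Sum>\<sigma>\<in>S. r \<sigma> * h \<sigma> k)"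
proof -
  have hb: "hom_poly D m (h \<sigma>)" "harmonic D (h \<sigma>)" if "\<sigma> \<in> S" for \<sigma>
    using assms that unfolding harm_basis_def by auto
  show "hom_poly D m (\<lambda>k. \<Sum>\<sigma>\<in>S. r \<sigma> * h \<sigma> k)" using hb(1) unfolding hom_poly_def by simp
  have "(\<Sum>i=1..D. of_nat ((k i + 2) * (k i + 1)) * (\<Sum>\<sigma>\<in>S. r \<sigma> * h \<sigma> (k(i := k i + 2))))
      = (\<Sum>\<sigma>\<in>S. r \<sigma> * (\<Sum>i=1..D. of_nat ((k i + 2) * (k i + 1)) * h \<sigma> (k(i := k i + 2))))" for k
    unfolding sum_distrib_left by (subst sum.swap) (simp only: mult.left_commute)
  thus "harmonic D (\<lambda>k. \<Sum>\<sigma>\<in>S. r \<sigma> * h \<sigma> k)" using hb(2) unfolding harmonic_def by simp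
qed

lemma harm_basis_expansion_coeffs_zero:
  assumes D: "1 \<le> D" and HB: "\<forall>m. harm_basis D m (Sig m) (h m)"
    and z: "\<And>u. (\<Sum>i=1..D. (u i)^2) = 1 \<Longrightarrow> (\<Sum>m\<le>M. \<Sum>\<sigma>\<in>Sig m. r m \<sigma> * peval D m (h m \<sigma>) u) = 0"
    and m: "m \<le> M" and \<sigma>: "\<sigma> \<in> Sig m"
  shows "r m \<sigma> = 0"
proof -
  have fin: "finite (Sig m')" for m' using HB unfolding harm_basis_def by blast
  have "(\<Sum>\<sigma>\<in>Sig m. r m \<sigma> * h m \<sigma> k) = 0" for k
  proof (rule harmonic_coeffs_zero[OF D _ _ m, where c="\<lambda>m' k. \<Sum>\<sigma>\<in>Sig m'. r m' \<sigma> * h m' \<sigma> k"])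
    show "hom_poly D m' (\<lambda>k. \<Sum>\<sigma>\<in>Sig m'. r m' \<sigma> * h m' \<sigma> k) \<and> harmonic D (\<lambda>k. \<Sum>\<sigma>\<in>Sig m'. r m' \<sigma> * h m' \<sigma> k)"
      for m' using harm_basis_combination HB by blast
    show "(\<Sum>m'\<le>M. peval D m' (\<lambda>k. \<Sum>\<sigma>\<in>Sig m'. r m' \<sigma> * h m' \<sigma> k) u) = 0" if "(\<Sum>i=1..D. (u i)^2) = 1" for u
      using z[OF that] by (simp add: peval_sum[OF fin] peval_mult)
  qed
  thus ?thesis using HB \<sigma> unfolding harm_basis_def by blast
qed

context complex_vs
begin

lemma harmonic_expansion_zero:
  assumes D: "1 \<le> D" and HB: "\<forall>m. harm_basis D m (Sig m) (h m)"
    and z: "\<And>u. (\<Sum>i=1..D. (u i)^2) = 1 \<Longrightarrow> (\<Sum>m\<le>M. \<Sum>\<sigma>\<in>Sig m. sc (peval D m (h m \<sigma>) u) (w m \<sigma>)) = 0"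
    and m: "m \<le> M" and \<sigma>: "\<sigma> \<in> Sig m"
  shows "w m \<sigma> = 0"
proof -
  have fin: "finite (Sig m')" for m' using HB unfolding harm_basis_def by blast
  have "finite (\<Union>m'\<in>{..M}. w m' ` Sig m')" by (simp add: fin)
  then obtain B where B: "finite B" "independent B" "span B = span (\<Union>m'\<in>{..M}. w m' ` Sig m')"
    by (rule finite_basis_of_span)
  have wB: "w m' \<sigma>' \<in> span B" if "m' \<le> M" "\<sigma>' \<in> Sig m'" for m' \<sigma>'
    unfolding B(3) using that by (intro span_base) auto
  have "representation B (w m \<sigma>) b = 0" for b
  proof (rule harm_basis_expansion_coeffs_zero[OF D HB _ m \<sigma>, where r="\<lambda>m' \<sigma>'. representation B (w m' \<sigma>') b"])
    fix u :: "nat \<Rightarrow> real" assume "(\<Sum>i=1..D. (u i)^2) = 1"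
    hence "0 = representation B (\<Sum>m'\<le>M. \<Sum>\<sigma>'\<in>Sig m'. sc (peval D m' (h m' \<sigma>') u) (w m' \<sigma>')) b"
      using z by (simp add: representation_zero)
    also have "\<dots> = (\<Sum>m'\<le>M. \<Sum>\<sigma>'\<in>Sig m'. peval D m' (h m' \<sigma>') u * representation B (w m' \<sigma>') b)"
      by (subst representation_sum_span[OF B(2)])
         (auto intro!: span_sum span_scale wB sum.cong representation_sum_scale[OF B(2)])
    finally show "(\<Sum>m'\<le>M. \<Sum>\<sigma>'\<in>Sig m'. representation B (w m' \<sigma>') b * peval D m' (h m' \<sigma>') u) = 0"
      by (simp add: mult.commute)
  qed
  thus ?thesis using representation_eqI[OF B(1,2) wB[OF m \<sigma>] span_zero] by (simp add: representation_zero)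
qed

end

section \<open>Translations are derivations of the reconstructed field\<close>

text \<open>The F_g of the proof idea; its coefficients in the harmonic polynomials are the mu^D.\<close>
definition conj_prod ::
  "((nat \<Rightarrow> nat \<Rightarrow> complex) \<Rightarrow> 'v \<Rightarrow> 'v) \<Rightarrow> (int \<Rightarrow> 'v \<Rightarrow> 'v \<Rightarrow> 'v) \<Rightarrow> int \<Rightarrow> (nat \<Rightarrow> nat \<Rightarrow> complex) \<Rightarrow> 'v \<Rightarrow> 'v \<Rightarrow> 'v"
  where "conj_prod U Y n g a b = U g (Y n (inv (U g) a) (inv (U g) b))"

locale cD_setting =
  fixes sc :: "complex \<Rightarrow> 'v::ab_group_add \<Rightarrow> 'v"
    and D :: nat and V0 V1 :: "'v set"
    and Y :: "int \<Rightarrow> 'v \<Rightarrow> 'v \<Rightarrow> 'v" and vac :: 'v and T1 :: "'v \<Rightarrow> 'v"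
    and T C :: "nat \<Rightarrow> 'v \<Rightarrow> 'v" and H :: "'v \<Rightarrow> 'v" and Om :: "nat \<Rightarrow> nat \<Rightarrow> 'v \<Rightarrow> 'v"
    and ip :: "'v \<Rightarrow> 'v \<Rightarrow> complex" and U :: "(nat \<Rightarrow> nat \<Rightarrow> complex) \<Rightarrow> 'v \<Rightarrow> 'v"
  assumes setting: "setting sc D V0 V1 Y vac T1 T H Om C ip U"
begin

lemma
  shows even_D: "even D"
    and vertex_algebra: "vertex_algebra_1 sc V0 V1 Y vac T1"
    and cD_rel: "cD_relations sc D T H Om C"
    and generators: "\<forall>X\<in>cD_gens D T H Om C. lin sc X \<and> even_op V0 V1 X \<and> op_local sc V0 V1 Y X \<and> X vac = 0"
    and T_one: "T 1 = T1"
    and Om_locally_finite: "\<forall>v. \<exists>B. finite B \<and> v \<in> module.span sc B \<and>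
           (\<forall>\<alpha>\<in>{1..D}. \<forall>\<beta>\<in>{1..D}. Om \<alpha> \<beta> ` module.span sc B \<subseteq> module.span sc B)"
    and U_integrates: "integrates sc D Om U"
  using setting unfolding setting_def by auto

sublocale vertex_alg sc V0 V1 Y vac T1
  using vertex_algebra unfolding vertex_alg_def vertex_alg_axioms_def complex_vs_def vertex_algebra_1_def
  by blast

lemma generator_props:
  assumes "X \<in> cD_gens D T H Om C"
  shows "lin sc X" "even_op V0 V1 X" "op_local sc V0 V1 Y X" "X vac = 0"
  using generators assms by auto

lemma lin_T: "d \<in> {1..D} \<Longrightarrow> lin sc (T d)"
  by (rule generator_props) (auto simp: cD_gens_def)

lemma lin_Om: "a \<in> {1..D} \<Longrightarrow> b \<in> {1..D} \<Longrightarrow> lin sc (Om a b)"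
  by (rule generator_props) (auto simp: cD_gens_def)

lemma T_derivation:
  assumes d: "d \<in> {1..D}"
  shows "T d (Y n x y) = Y n (T d x) y + Y n x (T d y)"
proof (rule local_op_derivation)
  show "lin sc (T d)" "even_op V0 V1 (T d)" "op_local sc V0 V1 Y (T d)" "T d vac = 0"
    using d by (auto intro: generator_props simp: cD_gens_def)
  have "comm (T d) (T 1) = (\<lambda>v. 0)" using cD_rel d unfolding cD_relations_def by auto
  thus "T d (T1 v) = T1 (T d v)" for v unfolding comm_def T_one by (metis eq_iff_diff_eq_0)
qed

lemma comm_Om_T:
  assumes "a \<in> {1..D}" "b \<in> {1..D}" "d \<in> {1..D}"
  shows "Om a b (T d x) - T d (Om a b x) = (if a = d then T b x else 0) - (if b = d then T a x else 0)"
proof -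
  have "comm (Om a b) (T d) = (\<lambda>v. (if a = d then T b v else 0) - (if b = d then T a v else 0))"
    using cD_rel assms unfolding cD_relations_def by blast
  thus ?thesis unfolding comm_def by meson
qed

text \<open>The matrix of ad(rho X) on span{T_1, ..., T_D}: it is the action of X on C^D.\<close>
definition rho_T_coeff :: "(nat \<Rightarrow> nat \<Rightarrow> complex) \<Rightarrow> nat \<Rightarrow> nat \<Rightarrow> complex" where
  "rho_T_coeff X e d = (\<Sum>a=1..D. \<Sum>b\<in>{a<..D}. X b a * ((if a = d \<and> e = b then 1 else 0) - (if b = d \<and> e = a then 1 else 0)))"

lemma rho_eq: "rho sc D Om X = (\<lambda>v. \<Sum>a=1..D. \<Sum>b\<in>{a<..D}. sc (X b a) (Om a b v))"
  by (rule ext) (simp add: rho_def)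

lemma lin_rho: "lin sc (rho sc D Om X)"
  unfolding rho_eq
  by (intro lin_sum_fun lin_scale_fun lin_Om) auto

lemma delta_sum:
  assumes "e0 \<in> {1..D}"
  shows "(\<Sum>e=1..D. sc (if P \<and> e = e0 then 1 else 0) (T e x)) = (if P then T e0 x else 0)"
proof -
  have "(\<Sum>e=1..D. sc (if P \<and> e = e0 then 1 else 0) (T e x)) = (\<Sum>e=1..D. if e = e0 then (if P then T e x else 0) else 0)"
    by (intro sum.cong refl) auto
  also have "\<dots> = (if P then T e0 x else 0)" using assms by (simp add: sum.delta)
  finally show ?thesis .
qed

lemma rho_T_commutator:
  assumes d: "d \<in> {1..D}"
  shows "rho sc D Om X (T d x) = T d (rho sc D Om X x) + (\<Sum>e=1..D. sc (rho_T_coeff X e d) (T e x))"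
proof -
  have ab: "a \<in> {1..D}" "b \<in> {1..D}" if "a \<in> {1..D}" "b \<in> {a<..D}" for a b using that by auto
  have "rho sc D Om X (T d x) - T d (rho sc D Om X x)
      = (\<Sum>a=1..D. \<Sum>b\<in>{a<..D}. sc (X b a) (Om a b (T d x) - T d (Om a b x)))"
    unfolding rho_eq using lin_T[OF d]
    by (simp add: lin_sum lin_scale scale_right_diff_distrib sum_subtractf)
  also have "\<dots> = (\<Sum>a=1..D. \<Sum>b\<in>{a<..D}. sc (X b a) ((if a = d then T b x else 0) - (if b = d then T a x else 0)))"
  proof (intro sum.cong refl)
    fix a b assume a: "a \<in> {1..D}" and b: "b \<in> {a<..D}"
    show "sc (X b a) (Om a b (T d x) - T d (Om a b x)) = sc (X b a) ((if a = d then T b x else 0) - (if b = d then T a x else 0))"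
      by (simp only: comm_Om_T[OF ab(1)[OF a b] ab(2)[OF a b] d])
  qed
  also have "\<dots> = (\<Sum>a=1..D. \<Sum>b\<in>{a<..D}. \<Sum>e=1..D. sc (X b a * ((if a = d \<and> e = b then 1 else 0) - (if b = d \<and> e = a then 1 else 0))) (T e x))"
  proof (intro sum.cong refl)
    fix a b assume a: "a \<in> {1..D}" and b: "b \<in> {a<..D}"
    have "(\<Sum>e=1..D. sc (X b a * ((if a = d \<and> e = b then 1 else 0) - (if b = d \<and> e = a then 1 else 0))) (T e x))
        = sc (X b a) ((\<Sum>e=1..D. sc (if a = d \<and> e = b then 1 else 0) (T e x)) - (\<Sum>e=1..D. sc (if b = d \<and> e = a then 1 else 0) (T e x)))"
      by (simp add: scale_sum_right scale_right_diff_distrib sum_subtractf algebra_simps)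
    also have "\<dots> = sc (X b a) ((if a = d then T b x else 0) - (if b = d then T a x else 0))"
      using delta_sum[OF ab(2)[OF a b], of "a = d" x] delta_sum[OF ab(1)[OF a b], of "b = d" x] by simp
    finally show "sc (X b a) ((if a = d then T b x else 0) - (if b = d then T a x else 0)) =
        (\<Sum>e=1..D. sc (X b a * ((if a = d \<and> e = b then 1 else 0) - (if b = d \<and> e = a then 1 else 0))) (T e x))" by simp
  qed
  also have "\<dots> = (\<Sum>e=1..D. sc (rho_T_coeff X e d) (T e x))"
    unfolding rho_T_coeff_def scale_sum_left
    by (subst sum.swap, rule sum.cong[OF refl], subst sum.swap, rule refl)
  finally show ?thesis by (simp add: algebra_simps)
qed

definition rotates_T :: "('v \<Rightarrow> 'v) \<Rightarrow> (nat \<Rightarrow> nat \<Rightarrow> complex) \<Rightarrow> bool" where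
  "rotates_T f K \<longleftrightarrow> lin sc f \<and> (\<forall>B. (\<forall>a\<in>{1..D}. \<forall>b\<in>{1..D}. Om a b ` span B \<subseteq> span B) \<longrightarrow> f ` span B \<subseteq> span B) \<and>
     (\<forall>d\<in>{1..D}. \<forall>x. f (T d x) = T d (f x) + (\<Sum>e=1..D. sc (K e d) (T e x)))"

lemma rotates_T_lin: "rotates_T f K \<Longrightarrow> lin sc f"
  unfolding rotates_T_def by blast

lemma rotates_T_span: "rotates_T f K \<Longrightarrow> (\<And>a b. a \<in> {1..D} \<Longrightarrow> b \<in> {1..D} \<Longrightarrow> Om a b ` span B \<subseteq> span B)
    \<Longrightarrow> f ` span B \<subseteq> span B"
  unfolding rotates_T_def by blast

lemma rotates_T_comm: "rotates_T f K \<Longrightarrow> d \<in> {1..D} \<Longrightarrow> f (T d x) = T d (f x) + (\<Sum>e=1..D. sc (K e d) (T e x))"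
  unfolding rotates_T_def by blast

lemma rotates_T_rho: "rotates_T (rho sc D Om X) (rho_T_coeff X)"
  unfolding rotates_T_def
proof (intro conjI allI impI ballI)
  show "lin sc (rho sc D Om X)" by (rule lin_rho)
next
  fix B assume inv: "\<forall>a\<in>{1..D}. \<forall>b\<in>{1..D}. Om a b ` span B \<subseteq> span B"
  show "rho sc D Om X ` span B \<subseteq> span B"
  proof
    fix y assume "y \<in> rho sc D Om X ` span B"
    then obtain x where x: "x \<in> span B" "y = rho sc D Om X x" by blast
    have "Om a b x \<in> span B" if "a \<in> {1..D}" "b \<in> {a<..D}" for a b
      using inv that x(1) by (auto simp: image_subset_iff)
    thus "y \<in> span B" unfolding x(2) rho_eq by (intro span_sum span_scale) auto
  qed
next
  fix d x assume "d \<in> {1..D}"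
  thus "rho sc D Om X (T d x) = T d (rho sc D Om X x) + (\<Sum>e = 1..D. sc (rho_T_coeff X e d) (T e x))"
    by (rule rho_T_commutator)
qed

lemma rotates_T_uminus:
  assumes f: "rotates_T f K"
  shows "rotates_T (\<lambda>x. - f x) (\<lambda>e d. - K e d)"
  unfolding rotates_T_def
proof (intro conjI allI impI ballI)
  show "lin sc (\<lambda>x. - f x)" by (rule lin_uminus[OF rotates_T_lin[OF f]])
  show "(\<lambda>x. - f x) ` span B \<subseteq> span B" if "\<forall>a\<in>{1..D}. \<forall>b\<in>{1..D}. Om a b ` span B \<subseteq> span B" for B
    using rotates_T_span[OF f] that span_neg by blast
  show "- f (T d x) = T d (- f x) + (\<Sum>e = 1..D. sc (- K e d) (T e x))" if d: "d \<in> {1..D}" for d x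
    using rotates_T_comm[OF f d, of x] by (simp add: lin_neg[OF lin_T[OF d]] sum_negf)
qed

lemma rotates_T_inv_basis:
  assumes f: "rotates_T f K" and G: "finite G"
  obtains B where "inv_basis f B" "G \<subseteq> span B"
proof -
  let ?I = "{1..D} \<times> {1..D}" and ?L = "\<lambda>p. Om (fst p) (snd p)"
  have "\<exists>B. finite B \<and> G \<subseteq> span B \<and> (\<forall>i\<in>?I. ?L i ` span B \<subseteq> span B)"
  proof (rule locally_finite_common_span[OF _ _ G])
    show "lin sc (?L i)" if "i \<in> ?I" for i using that lin_Om by auto
    show "\<exists>B. finite B \<and> v \<in> span B \<and> (\<forall>i\<in>?I. ?L i ` span B \<subseteq> span B)" for v
      using Om_locally_finite by auto
  qed
  then obtain B0 where B0: "finite B0" "G \<subseteq> span B0" "\<forall>a\<in>{1..D}. \<forall>b\<in>{1..D}. Om a b ` span B0 \<subseteq> span B0"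
    by auto
  obtain B where "inv_basis f B" "span B = span B0"
    using inv_basis_exists[OF rotates_T_lin[OF f] B0(1) rotates_T_span[OF f]] B0(3) by blast
  thus ?thesis using that B0(2) by blast
qed

text \<open>Adjoining the vectors T d b to an f-invariant basis keeps the span f-invariant, because
f T d b = T d (f b) + sum_e K e d T e b.\<close>
lemma rotates_T_inv_basis_T_image:
  assumes f: "rotates_T f K" and B: "inv_basis f B"
  obtains B2 where "inv_basis f B2" "\<And>d b. d \<in> {1..D} \<Longrightarrow> b \<in> B \<Longrightarrow> T d b \<in> span B2"
proof -
  define G2 where "G2 = B \<union> (\<Union>d\<in>{1..D}. T d ` B)"
  have fG2: "finite G2" unfolding G2_def using B unfolding inv_basis_def by simp
  have TG2: "T d y \<in> span G2" if "d \<in> {1..D}" "y \<in> span B" for d y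
  proof (rule lin_span_image[OF lin_T[OF that(1)] _ that(2)])
    fix b assume "b \<in> B"
    hence "T d b \<in> G2" unfolding G2_def using that(1) by blast
    thus "T d b \<in> span G2" by (rule span_base)
  qed
  have "f g \<in> span G2" if g: "g \<in> G2" for g
  proof (cases "g \<in> B")
    case True
    thus ?thesis using B span_mono[of B G2] unfolding inv_basis_def G2_def by blast
  next
    case False
    then obtain d b where db: "d \<in> {1..D}" "b \<in> B" "g = T d b" using g unfolding G2_def by blast
    have "f g = T d (f b) + (\<Sum>e=1..D. sc (K e d) (T e b))" using rotates_T_comm[OF f db(1)] db(3) by simp
    moreover have "T d (f b) \<in> span G2" using B db by (intro TG2) (auto simp: inv_basis_def)
    moreover have "(\<Sum>e=1..D. sc (K e d) (T e b)) \<in> span G2"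
      by (intro span_sum span_scale TG2 span_base db(2)) auto
    ultimately show ?thesis by (simp add: span_add)
  qed
  hence "f ` span G2 \<subseteq> span G2" using lin_span_image[OF rotates_T_lin[OF f]] by blast
  then obtain B2 where B2: "inv_basis f B2" "span B2 = span G2"
    using inv_basis_exists[OF rotates_T_lin[OF f] fG2] by blast
  show ?thesis by (rule that[OF B2(1)]) (unfold B2(2), rule span_base, auto simp: G2_def)
qed

lemma expop_rotates_T_inverse:
  assumes f: "rotates_T f K"
  shows "expop sc (\<lambda>x. - f x) (expop sc f y) = y"
proof -
  obtain B where "inv_basis f B" "{y} \<subseteq> span B" using rotates_T_inv_basis[OF f, of "{y}"] by auto
  thus ?thesis using expop_uminus_expop[OF rotates_T_lin[OF f]] by simp
qed

lemma expop_rotates_T_add: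
  assumes f: "rotates_T f K"
  shows "expop sc f (x + y) = expop sc f x + expop sc f y"
proof -
  obtain B where "inv_basis f B" "{x, y} \<subseteq> span B" using rotates_T_inv_basis[OF f, of "{x, y}"] by auto
  thus ?thesis using expop_add[OF rotates_T_lin[OF f]] by auto
qed

lemma expop_rotates_T_T:
  assumes f: "rotates_T f K" and g: "g \<in> {1..D}"
  shows "expop sc f (T g y) = (\<Sum>d=1..D. sc (suminf (\<lambda>j. kpow {1..D} K j d g / of_nat (fact j))) (T d (expop sc f y)))"
proof -
  obtain B where B: "inv_basis f B" "{y} \<subseteq> span B" using rotates_T_inv_basis[OF f, of "{y}"] by auto
  obtain B2 where B2: "inv_basis f B2" "\<And>d b. d \<in> {1..D} \<Longrightarrow> b \<in> B \<Longrightarrow> T d b \<in> span B2"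
    using rotates_T_inv_basis_T_image[OF f B(1)] by blast
  show ?thesis
    by (rule expop_intertwine[OF _ rotates_T_lin[OF f] lin_T rotates_T_comm[OF f] g B(1) _ B2(1) B2(2)])
       (use B in auto)
qed

lemma inv_expop_rotates_T:
  assumes f: "rotates_T f K"
  shows "inv (expop sc f) = expop sc (\<lambda>x. - f x)"
proof -
  have "expop sc f (expop sc (\<lambda>x. - f x) y) = y" for y
    using expop_rotates_T_inverse[OF rotates_T_uminus[OF f]] by simp
  thus ?thesis using expop_rotates_T_inverse[OF f] by (intro inv_equality ext) auto
qed

text \<open>Conjugating by exp(-f) turns T g into a combination of the T d, and such a combination is
again a derivation of every product Y n.\<close>
lemma expop_conj_derivation:
  assumes f: "rotates_T f K" and g: "g \<in> {1..D}"
  shows "T g (expop sc f (Y n (expop sc (\<lambda>x. - f x) a) (expop sc (\<lambda>x. - f x) b)))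
    = expop sc f (Y n (expop sc (\<lambda>x. - f x) (T g a)) (expop sc (\<lambda>x. - f x) b))
      + expop sc f (Y n (expop sc (\<lambda>x. - f x) a) (expop sc (\<lambda>x. - f x) (T g b)))"
proof -
  let ?E = "expop sc f" and ?Em = "expop sc (\<lambda>x. - f x)"
  have f': "rotates_T (\<lambda>x. - f x) (\<lambda>e d. - K e d)" by (rule rotates_T_uminus[OF f])
  have EEm: "?E (?Em z) = z" for z using expop_rotates_T_inverse[OF f'] by simp
  define c where "c d = suminf (\<lambda>j. kpow {1..D} (\<lambda>e d. - K e d) j d g / of_nat (fact j))" for d
  define S where "S z = (\<Sum>d=1..D. sc (c d) (T d z))" for z
  have Em_T: "?Em (T g z) = S (?Em z)" for z unfolding S_def c_def by (rule expop_rotates_T_T[OF f' g])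
  have T_E: "T g (?E z) = ?E (S z)" for z
    by (metis EEm Em_T expop_rotates_T_inverse[OF f])
  have S_derivation: "S (Y n x y) = Y n (S x) y + Y n x (S y)" for x y
  proof -
    have "S (Y n x y) = (\<Sum>d=1..D. sc (c d) (Y n (T d x) y) + sc (c d) (Y n x (T d y)))"
      unfolding S_def by (intro sum.cong refl) (simp add: T_derivation scale_right_distrib)
    also have "\<dots> = Y n (S x) y + Y n x (S y)"
      unfolding S_def sum.distrib lin_sum[OF Y_lin_right] lin_sum[OF Y_lin_left[of n y], simplified]
      by (simp add: Y_scale_right Y_scale_left)
    finally show ?thesis .
  qed
  have "T g (?E (Y n (?Em a) (?Em b))) = ?E (Y n (S (?Em a)) (?Em b) + Y n (?Em a) (S (?Em b)))"
    unfolding T_E S_derivation ..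
  also have "\<dots> = ?E (Y n (?Em (T g a)) (?Em b)) + ?E (Y n (?Em a) (?Em (T g b)))"
    unfolding Em_T by (rule expop_rotates_T_add[OF f])
  finally show ?thesis .
qed

end

lemma Xu_soc: "Xu D \<theta> u' \<in> soc D"
  unfolding soc_def
proof (intro CollectI conjI)
  show "dmat D (Xu D \<theta> u')"
    unfolding dmat_def
  proof (intro allI impI)
    fix i j assume "i \<notin> {1..D} \<or> j \<notin> {1..D}"
    hence "Mgen 1 a i j = 0" if "a \<in> {2..D}" for a using that unfolding Mgen_def by auto
    thus "Xu D \<theta> u' i j = 0" unfolding Xu_def by simp
  qed
  show "mtr (Xu D \<theta> u') = (\<lambda>i j. - Xu D \<theta> u' i j)"
    unfolding mtr_def
  proof (rule ext, rule ext)
    fix i j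
    have "(\<Sum>a=2..D. complex_of_real (u' a) * Mgen 1 a j i) = - (\<Sum>a=2..D. complex_of_real (u' a) * Mgen 1 a i j)"
      unfolding sum_negf[symmetric] by (rule sum.cong) (auto simp: Mgen_def)
    thus "Xu D \<theta> u' j i = - Xu D \<theta> u' i j" unfolding Xu_def by simp
  qed
qed

lemma (in cD_setting) U_conj_derivation:
  assumes g: "g \<in> {1..D}"
  shows "T g (conj_prod U Y n (mexp D (Xu D \<theta> u')) a b)
       = conj_prod U Y n (mexp D (Xu D \<theta> u')) (T g a) b + conj_prod U Y n (mexp D (Xu D \<theta> u')) a (T g b)"
proof -
  have U: "U (mexp D (Xu D \<theta> u')) = expop sc (rho sc D Om (Xu D \<theta> u'))"
    using U_integrates Xu_soc unfolding integrates_def by blast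
  show ?thesis
    unfolding conj_prod_def U inv_expop_rotates_T[OF rotates_T_rho]
    by (simp only: expop_conj_derivation[OF rotates_T_rho g])
qed

context complex_vs
begin

definition harm_sum ::
  "nat \<Rightarrow> (nat \<Rightarrow> 's set) \<Rightarrow> (nat \<Rightarrow> 's \<Rightarrow> (nat \<Rightarrow> nat) \<Rightarrow> complex) \<Rightarrow> nat \<Rightarrow> (nat \<Rightarrow> real) \<Rightarrow> (nat \<Rightarrow> 's \<Rightarrow> 'v) \<Rightarrow> 'v"
  where "harm_sum D Sig h M u w = (\<Sum>m\<le>M. \<Sum>\<sigma>\<in>Sig m. sc (peval D m (h m \<sigma>) u) (w m \<sigma>))"

lemma muD_expansion_upto:
  assumes "muD_expansion sc D Y U Sig h muD"
  obtains M where "\<And>M' \<theta> u'. M \<le> M' \<Longrightarrow> (\<Sum>\<alpha>=2..D. (u' \<alpha>)\<^sup>2) = 1 \<Longrightarrow>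
    harm_sum D Sig h M' (polar \<theta> u') (\<lambda>m \<sigma>. muD n m \<sigma> a b) = conj_prod U Y n (mexp D (Xu D \<theta> u')) a b"
proof -
  obtain M where Z: "\<forall>m \<sigma>. M < m \<longrightarrow> \<sigma> \<in> Sig m \<longrightarrow> muD n m \<sigma> a b = 0"
    and E: "\<forall>\<theta> u'. (\<Sum>\<alpha>=2..D. (u' \<alpha>)\<^sup>2) = 1 \<longrightarrow>
      harm_sum D Sig h M (polar \<theta> u') (\<lambda>m \<sigma>. muD n m \<sigma> a b) = conj_prod U Y n (mexp D (Xu D \<theta> u')) a b"
    using assms unfolding muD_expansion_def Let_def conj_prod_def harm_sum_def polar_def by blast
  show ?thesis
  proof (rule that)
    fix M' \<theta> and u' :: "nat \<Rightarrow> real" assume M': "M \<le> M'" and u': "(\<Sum>\<alpha>=2..D. (u' \<alpha>)\<^sup>2) = 1"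
    have "harm_sum D Sig h M' (polar \<theta> u') (\<lambda>m \<sigma>. muD n m \<sigma> a b) = harm_sum D Sig h M (polar \<theta> u') (\<lambda>m \<sigma>. muD n m \<sigma> a b)"
      unfolding harm_sum_def by (rule sum.mono_neutral_right) (use Z M' in auto)
    thus "harm_sum D Sig h M' (polar \<theta> u') (\<lambda>m \<sigma>. muD n m \<sigma> a b) = conj_prod U Y n (mexp D (Xu D \<theta> u')) a b"
      using E u' by simp
  qed
qed

text \<open>An identity between the conjugated products that is linear in the output transfers to their
expansion coefficients, by the independence of spherical harmonics.\<close>
lemma muD_derivation_transfer:
  assumes D: "2 \<le> D" and HB: "\<forall>m. harm_basis D m (Sig m) (h m)"
    and E: "muD_expansion sc D Y U Sig h muD" and L: "lin sc L"
    and cov: "\<And>\<theta> u'. L (conj_prod U Y n (mexp D (Xu D \<theta> u')) a b)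
       = conj_prod U Y n (mexp D (Xu D \<theta> u')) a' b + conj_prod U Y n (mexp D (Xu D \<theta> u')) a b'"
    and \<sigma>: "\<sigma> \<in> Sig m"
  shows "L (muD n m \<sigma> a b) = muD n m \<sigma> a' b + muD n m \<sigma> a b'"
proof -
  obtain M1 where E1: "\<And>M' \<theta> u'. M1 \<le> M' \<Longrightarrow> (\<Sum>\<alpha>=2..D. (u' \<alpha>)\<^sup>2) = 1 \<Longrightarrow>
      harm_sum D Sig h M' (polar \<theta> u') (\<lambda>m \<sigma>. muD n m \<sigma> a b) = conj_prod U Y n (mexp D (Xu D \<theta> u')) a b"
    by (rule muD_expansion_upto[OF E, where n=n and a=a and b=b]) blast
  obtain M2 where E2: "\<And>M' \<theta> u'. M2 \<le> M' \<Longrightarrow> (\<Sum>\<alpha>=2..D. (u' \<alpha>)\<^sup>2) = 1 \<Longrightarrow>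
      harm_sum D Sig h M' (polar \<theta> u') (\<lambda>m \<sigma>. muD n m \<sigma> a' b) = conj_prod U Y n (mexp D (Xu D \<theta> u')) a' b"
    by (rule muD_expansion_upto[OF E, where n=n and a=a' and b=b]) blast
  obtain M3 where E3: "\<And>M' \<theta> u'. M3 \<le> M' \<Longrightarrow> (\<Sum>\<alpha>=2..D. (u' \<alpha>)\<^sup>2) = 1 \<Longrightarrow>
      harm_sum D Sig h M' (polar \<theta> u') (\<lambda>m \<sigma>. muD n m \<sigma> a b') = conj_prod U Y n (mexp D (Xu D \<theta> u')) a b'"
    by (rule muD_expansion_upto[OF E, where n=n and a=a and b=b']) blast
  define M where "M = max (max M1 M2) (max M3 m)"
  define w where "w m' \<sigma>' = L (muD n m' \<sigma>' a b) - muD n m' \<sigma>' a' b - muD n m' \<sigma>' a b'" for m' \<sigma>'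
  have lin_harm_sum: "harm_sum D Sig h M u w = L (harm_sum D Sig h M u (\<lambda>m \<sigma>. muD n m \<sigma> a b))
      - harm_sum D Sig h M u (\<lambda>m \<sigma>. muD n m \<sigma> a' b) - harm_sum D Sig h M u (\<lambda>m \<sigma>. muD n m \<sigma> a b')" for u
    unfolding w_def harm_sum_def by (simp add: lin_sum[OF L] lin_scale[OF L] scale_right_diff_distrib sum_subtractf)
  have z: "harm_sum D Sig h M u w = 0" if u: "(\<Sum>i=1..D. (u i)^2) = 1" for u
  proof -
    obtain \<theta> u' where u': "(\<Sum>\<alpha>=2..D. (u' \<alpha>)^2) = 1" and \<theta>: "\<And>i. i \<in> {1..D} \<Longrightarrow> u i = polar \<theta> u' i"
      using unit_sphere_polar[OF D u] by blast
    have "peval D m' (h m' \<sigma>') u = peval D m' (h m' \<sigma>') (polar \<theta> u')" for m' \<sigma>'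
      by (rule peval_cong) (simp add: \<theta>)
    hence "harm_sum D Sig h M u w = harm_sum D Sig h M (polar \<theta> u') w"
      unfolding harm_sum_def by simp
    also have "\<dots> = 0"
      unfolding lin_harm_sum using E1[OF _ u'] E2[OF _ u'] E3[OF _ u'] cov by (simp add: M_def)
    finally show ?thesis .
  qed
  have "w m \<sigma> = 0"
    by (rule harmonic_expansion_zero[OF _ HB z[unfolded harm_sum_def] _ \<sigma>]) (use D in \<open>auto simp: M_def\<close>)
  thus ?thesis unfolding w_def by (simp add: algebra_simps)
qed

end

theorem mainTheorem11:
  fixes sc :: "complex \<Rightarrow> 'v::ab_group_add \<Rightarrow> 'v"
    and D :: nat and V0 V1 :: "'v set"
    and Y :: "int \<Rightarrow> 'v \<Rightarrow> 'v \<Rightarrow> 'v" and vac :: 'v and T1 :: "'v \<Rightarrow> 'v"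
    and T C :: "nat \<Rightarrow> 'v \<Rightarrow> 'v" and H :: "'v \<Rightarrow> 'v" and Om :: "nat \<Rightarrow> nat \<Rightarrow> 'v \<Rightarrow> 'v"
    and ip :: "'v \<Rightarrow> 'v \<Rightarrow> complex" and U :: "(nat \<Rightarrow> nat \<Rightarrow> complex) \<Rightarrow> 'v \<Rightarrow> 'v"
    and Sig :: "nat \<Rightarrow> 's set" and h :: "nat \<Rightarrow> 's \<Rightarrow> (nat \<Rightarrow> nat) \<Rightarrow> complex"
    and muD :: "int \<Rightarrow> nat \<Rightarrow> 's \<Rightarrow> 'v \<Rightarrow> 'v \<Rightarrow> 'v"
  assumes "setting sc D V0 V1 Y vac T1 T H Om C ip U"
    and "\<forall>m. harm_basis D m (Sig m) (h m)"
    and "muD_expansion sc D Y U Sig h muD"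
    and "\<alpha> \<in> {1..D}" and "\<sigma> \<in> Sig m"
  shows "T \<alpha> (muD n m \<sigma> a b) = muD n m \<sigma> (T \<alpha> a) b + muD n m \<sigma> a (T \<alpha> b)"
proof -
  interpret cD_setting sc D V0 V1 Y vac T1 T C H Om ip U
    by (rule cD_setting.intro) (rule assms(1))
  have "2 \<le> D" using assms(4) even_D by (cases D) (auto, presburger)
  thus ?thesis
    by (rule muD_derivation_transfer[OF _ assms(2,3) lin_T[OF assms(4)] U_conj_derivation[OF assms(4)] assms(5)])
qed

end
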